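(* Let $(\mathcal{M},g)$ be a Ricci-flat $D$-dimensional manifold whose metric, in coordinates $(x^1,\dots,x^{D-2},u,v)$, has the form $ds^2=\sum_{i,j=1}^{D-2}G_{ij}dx^idx^j+C(du^2+dv^2)$ with $C$ and $G_{ij}$ depending only on $(u,v)$ on a simply connected domain. Let $f=\sqrt{|\det(G_{ij})|}$. Then either $f$ is constant, or $(\partial f/\partial u,\partial f/\partial v)\neq(0,0)$ except at isolated points. *)

theory Defs
  imports "HOL-Analysis.Analysis" "HOL-Combinatorics.Permutations"
begin

text \<open>Points of the coordinate domain are functions nat => real; only the coordinates
  0..D-1 are meaningful. A metric in coordinates is a family of component functions
  g a b p (a, b < D).\<close>

definition pd :: "nat \<Rightarrow> ((nat \<Rightarrow> real) \<Rightarrow> real) \<Rightarrow> (nat \<Rightarrow> real) \<Rightarrow> real" where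
  "pd a F p = deriv (\<lambda>t. F (p(a := t))) (p a)"

definition inv_metric :: "nat \<Rightarrow> (nat \<Rightarrow> nat \<Rightarrow> (nat \<Rightarrow> real) \<Rightarrow> real) \<Rightarrow> nat \<Rightarrow> nat \<Rightarrow> (nat \<Rightarrow> real) \<Rightarrow> real" where
  "inv_metric D g a b p =
     (SOME h. \<forall>i<D. \<forall>j<D. (\<Sum>c<D. g i c p * h c j) = (if i = j then 1 else 0)) a b"

definition christoffel :: "nat \<Rightarrow> (nat \<Rightarrow> nat \<Rightarrow> (nat \<Rightarrow> real) \<Rightarrow> real) \<Rightarrow> nat \<Rightarrow> nat \<Rightarrow> nat \<Rightarrow> (nat \<Rightarrow> real) \<Rightarrow> real" where
  "christoffel D g a b c p =
     (1/2) * (\<Sum>d<D. inv_metric D g a d p *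
        (pd b (g d c) p + pd c (g d b) p - pd d (g b c) p))"

definition ricci :: "nat \<Rightarrow> (nat \<Rightarrow> nat \<Rightarrow> (nat \<Rightarrow> real) \<Rightarrow> real) \<Rightarrow> nat \<Rightarrow> nat \<Rightarrow> (nat \<Rightarrow> real) \<Rightarrow> real" where
  "ricci D g b d p =
     (\<Sum>a<D. pd a (christoffel D g a b d) p)
     - (\<Sum>a<D. pd d (christoffel D g a b a) p)
     + (\<Sum>a<D. \<Sum>e<D. christoffel D g a a e p * christoffel D g e b d p)
     - (\<Sum>a<D. \<Sum>e<D. christoffel D g a d e p * christoffel D g e b a p)"

definition pu :: "(real \<times> real \<Rightarrow> real) \<Rightarrow> real \<times> real \<Rightarrow> real" where
  "pu f w = deriv (\<lambda>t. f (t, snd w)) (fst w)"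

definition pv :: "(real \<times> real \<Rightarrow> real) \<Rightarrow> real \<times> real \<Rightarrow> real" where
  "pv f w = deriv (\<lambda>t. f (fst w, t)) (snd w)"

fun Ck_on :: "nat \<Rightarrow> (real \<times> real) set \<Rightarrow> (real \<times> real \<Rightarrow> real) \<Rightarrow> bool" where
  "Ck_on 0 S f = continuous_on S f"
| "Ck_on (Suc k) S f = (f differentiable_on S \<and> Ck_on k S (pu f) \<and> Ck_on k S (pv f))"

definition smooth2_on :: "(real \<times> real) set \<Rightarrow> (real \<times> real \<Rightarrow> real) \<Rightarrow> bool" where
  "smooth2_on S f = (\<forall>k. Ck_on k S f)"

definition detn :: "nat \<Rightarrow> (nat \<Rightarrow> nat \<Rightarrow> real) \<Rightarrow> real" where
  "detn n A = (\<Sum>\<sigma> | \<sigma> permutes {..<n}. of_int (sign \<sigma>) * (\<Prod>i<n. A i (\<sigma> i)))"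

text \<open>The metric ds^2 = sum G_ij dx^i dx^j + C (du^2 + dv^2) in coordinates
  (x^0..x^{n-1}, u = x^n, v = x^{n+1}), D = n + 2.\<close>
definition warped_metric :: "nat \<Rightarrow> (nat \<Rightarrow> nat \<Rightarrow> real \<times> real \<Rightarrow> real) \<Rightarrow> (real \<times> real \<Rightarrow> real)
    \<Rightarrow> nat \<Rightarrow> nat \<Rightarrow> (nat \<Rightarrow> real) \<Rightarrow> real" where
  "warped_metric n G C a b p =
     (if a < n \<and> b < n then G a b (p n, p (Suc n))
      else if a = b \<and> (a = n \<or> a = Suc n) then C (p n, p (Suc n))
      else 0)"

end

(* The fibre block R_ij (i, j < n) of the Ricci tensor, contracted with the inverse G^ij,
   is the Laplacian of f = sqrt |det G| in (u, v): Jacobi's formula gives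
   f_b = f tr(G^-1 G_b) / 2 for b = u, v, and the Christoffel symbols of the block metric
   turn G^ij R_ij into -(f_uu + f_vv) / (C f). Ricci-flatness therefore makes f harmonic.
   By the Cauchy-Riemann equations (with the symmetry of mixed partials) the conjugate
   gradient f_u - i f_v of a harmonic function is holomorphic, so on the connected domain
   it either vanishes identically, and f is constant, or it has isolated zeros. *)

theory Submission
  imports Defs "Jordan_Normal_Form.Determinant" "HOL-Complex_Analysis.Complex_Analysis"
begin

section \<open>Partial derivatives in the plane\<close>

type_synonym plane_fun = "real \<times> real \<Rightarrow> real"

definition axis_path :: "bool \<Rightarrow> real \<times> real \<Rightarrow> real \<Rightarrow> real \<times> real" where
  "axis_path b w s = (if b then (s, snd w) else (fst w, s))"

definition axis_coord :: "bool \<Rightarrow> real \<times> real \<Rightarrow> real" where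
  "axis_coord b w = (if b then fst w else snd w)"

definition partial :: "bool \<Rightarrow> plane_fun \<Rightarrow> plane_fun" where
  "partial b H = (if b then pu H else pv H)"

lemma axis_path_axis_path [simp]: "axis_path b (axis_path b w s) s' = axis_path b w s'"
  by (simp add: axis_path_def)

lemma axis_coord_axis_path [simp]: "axis_coord b (axis_path b w s) = s"
  by (simp add: axis_path_def axis_coord_def)

lemma axis_path_axis_coord [simp]: "axis_path b w (axis_coord b w) = w"
  by (simp add: axis_path_def axis_coord_def)

lemma partial_eq_deriv: "partial b H w = deriv (\<lambda>s. H (axis_path b w s)) (axis_coord b w)"
  by (cases b) (simp_all add: partial_def pu_def pv_def axis_path_def axis_coord_def)

lemma has_derivative_axis_path: "(axis_path b w has_derivative axis_path b 0) (at s)"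
  by (cases b) (auto simp: axis_path_def [abs_def] intro!: derivative_eq_intros)

lemma eventually_axis_path_in:
  assumes "open S" "w \<in> S"
  shows "\<forall>\<^sub>F s in nhds (axis_coord b w). axis_path b w s \<in> S"
proof -
  have "isCont (axis_path b w) (axis_coord b w)"
    using has_derivative_axis_path by (rule has_derivative_continuous)
  then show ?thesis
    using assms by (simp add: isCont_def tendsto_def eventually_nhds_conv_at)
qed

lemma has_real_derivative_partial:
  assumes "H differentiable (at (axis_path b w s))"
  shows "((\<lambda>s. H (axis_path b w s)) has_real_derivative partial b H (axis_path b w s)) (at s)"
proof -
  have "(H \<circ> axis_path b w) differentiable (at s)"
    using differentiable_chain_at[OF differentiableI[OF has_derivative_axis_path] assms] .
  then show ?thesis
    by (simp add: DERIV_deriv_iff_real_differentiable o_def partial_eq_deriv)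
qed

lemma has_derivative_partials:
  assumes "H differentiable (at w)"
  shows "(H has_derivative (\<lambda>h. pu H w * fst h + pv H w * snd h)) (at w)"
proof -
  obtain D where D: "(H has_derivative D) (at w)"
    using assms by (auto simp: differentiable_def)
  have lin: "linear D"
    using D by (rule has_derivative_linear)
  have D_axis: "D (axis_path b 0 1) = partial b H w" for b
  proof -
    have "((\<lambda>s. H (axis_path b w s)) has_derivative D \<circ> axis_path b 0) (at (axis_coord b w))"
      using diff_chain_at[OF has_derivative_axis_path, of H D b w "axis_coord b w"] D
      by (simp add: o_def)
    moreover have "((\<lambda>s. H (axis_path b w s)) has_derivative (*) (partial b H w)) (at (axis_coord b w))"
      using has_real_derivative_partial[of H b w "axis_coord b w"] assms
      by (simp add: has_field_derivative_def)
    ultimately have "D \<circ> axis_path b 0 = (*) (partial b H w)"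
      by (rule has_derivative_unique)
    then show ?thesis
      by (metis comp_apply mult_1_right)
  qed
  have "D h = pu H w * fst h + pv H w * snd h" for h
  proof -
    have "D h = D (fst h *\<^sub>R axis_path True 0 1 + snd h *\<^sub>R axis_path False 0 1)"
      by (simp add: axis_path_def)
    also have "\<dots> = fst h * D (axis_path True 0 1) + snd h * D (axis_path False 0 1)"
      by (simp only: linear_add[OF lin] linear_scale[OF lin] real_scaleR_def)
    finally have "D h = fst h * D (axis_path True 0 1) + snd h * D (axis_path False 0 1)" .
    then show ?thesis
      by (simp add: D_axis partial_def mult.commute)
  qed
  then have "D = (\<lambda>h. pu H w * fst h + pv H w * snd h)"
    by (rule ext)
  then show ?thesis
    using D by simp
qed

lemma has_real_derivative_pu:
  "f differentiable (at (s, t)) \<Longrightarrow> ((\<lambda>s. f (s, t)) has_real_derivative pu f (s, t)) (at s)"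
  using has_real_derivative_partial[of f True "(s, t)" s] by (simp add: axis_path_def partial_def)

lemma partial_eqI:
  assumes "open \<Omega>" "w \<in> \<Omega>" "\<And>x. x \<in> \<Omega> \<Longrightarrow> H x = F x"
    and "((\<lambda>s. F (axis_path b w s)) has_real_derivative D) (at (axis_coord b w))"
  shows "partial b H w = D"
proof -
  have "\<forall>\<^sub>F s in nhds (axis_coord b w). H (axis_path b w s) = F (axis_path b w s)"
    using eventually_axis_path_in[OF assms(1,2)] by eventually_elim (rule assms(3))
  then have "((\<lambda>s. H (axis_path b w s)) has_real_derivative D) (at (axis_coord b w))"
    using assms(4) by (subst DERIV_cong_ev[OF refl _ refl])
  then show ?thesis
    by (simp add: partial_eq_deriv DERIV_imp_deriv)
qed

lemma has_real_derivative_sqrt_abs: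
  assumes "(g has_real_derivative D) (at t)" "g t \<noteq> 0"
  shows "((\<lambda>s. sqrt \<bar>g s\<bar>) has_real_derivative sqrt \<bar>g t\<bar> * (D / g t) / 2) (at t)"
proof -
  have "((\<lambda>s. sqrt (sqrt ((g s)\<^sup>2))) has_real_derivative
      inverse (sqrt (sqrt ((g t)\<^sup>2))) / 2 * (inverse (sqrt ((g t)\<^sup>2)) / 2 * (2 * g t * D))) (at t)"
    using assms
    by (intro DERIV_chain2[OF DERIV_real_sqrt] DERIV_chain2[OF DERIV_real_sqrt]
        DERIV_power[THEN DERIV_cong])
      (auto simp: mult_ac)
  moreover have "inverse (sqrt \<bar>x\<bar>) / 2 * (inverse \<bar>x\<bar> / 2 * (2 * x * D)) = sqrt \<bar>x\<bar> * (D / x) / 2"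
    if "x \<noteq> 0" for x :: real
  proof -
    have "sqrt \<bar>x\<bar> * sqrt \<bar>x\<bar> = \<bar>x\<bar>" "x * x = \<bar>x\<bar> * \<bar>x\<bar>"
      by simp_all
    then show ?thesis
      using that by (simp add: field_simps)
  qed
  ultimately show ?thesis
    using assms(2) by (simp add: real_sqrt_abs)
qed

section \<open>Symmetry of mixed partial derivatives\<close>

definition second_difference :: "plane_fun \<Rightarrow> real \<times> real \<Rightarrow> real \<Rightarrow> real" where
  "second_difference f w h = f (w + (h, h)) - f (w + (h, 0)) - f (w + (0, h)) + f w"

lemma second_difference_comp_swap:
  "second_difference (f \<circ> prod.swap) (prod.swap w) h = second_difference f w h"
  by (cases w) (simp add: second_difference_def)

lemma pu_comp_swap: "pu (f \<circ> prod.swap) = pv f \<circ> prod.swap"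
  by (simp add: fun_eq_iff pu_def pv_def)

lemma pv_comp_swap: "pv (f \<circ> prod.swap) = pu f \<circ> prod.swap"
  by (simp add: fun_eq_iff pu_def pv_def)

lemma second_difference_mean_value:
  fixes f :: plane_fun
  assumes "0 < h"
    and diff: "\<And>s t. a \<le> s \<Longrightarrow> s \<le> a + h \<Longrightarrow> t \<in> {b, b + h} \<Longrightarrow> f differentiable (at (s, t))"
  obtains \<xi> where "a < \<xi>" "\<xi> < a + h"
    "second_difference f (a, b) h = h * (pu f (\<xi>, b + h) - pu f (\<xi>, b))"
proof -
  have "\<exists>\<xi>. a < \<xi> \<and> \<xi> < a + h \<and>
      (f (a + h, b + h) - f (a + h, b)) - (f (a, b + h) - f (a, b)) =
      (a + h - a) * (pu f (\<xi>, b + h) - pu f (\<xi>, b))"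
  proof (rule MVT2)
    show "a < a + h"
      using \<open>0 < h\<close> by simp
    fix s assume "a \<le> s" "s \<le> a + h"
    then show "((\<lambda>s. f (s, b + h) - f (s, b)) has_real_derivative pu f (s, b + h) - pu f (s, b)) (at s)"
      by (intro DERIV_diff has_real_derivative_pu diff) auto
  qed
  then show ?thesis
    using that by (auto simp: second_difference_def algebra_simps)
qed

lemma pu_increment_approx:
  fixes f :: plane_fun
  assumes "pu f differentiable (at (a, b))" "0 < e"
  obtains d where "0 < d" "\<And>\<xi> h. 0 < h \<Longrightarrow> h < d \<Longrightarrow> a \<le> \<xi> \<Longrightarrow> \<xi> \<le> a + h \<Longrightarrow>
    \<bar>pu f (\<xi>, b + h) - pu f (\<xi>, b) - pv (pu f) (a, b) * h\<bar> \<le> e * h"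
proof -
  define Pu Pv where "Pu = pu (pu f) (a, b)" and "Pv = pv (pu f) (a, b)"
  have "\<forall>\<epsilon>>0. \<exists>d>0. \<forall>y. norm (y - (a, b)) < d \<longrightarrow> norm (pu f y - pu f (a, b)
      - (Pu * fst (y - (a, b)) + Pv * snd (y - (a, b)))) \<le> \<epsilon> * norm (y - (a, b))"
    using has_derivative_partials[OF assms(1), unfolded has_derivative_at_alt]
    unfolding Pu_def Pv_def by blast
  moreover have "0 < e / 4"
    using \<open>0 < e\<close> by simp
  ultimately obtain d where "0 < d" and d: "\<And>y. norm (y - (a, b)) < d \<Longrightarrow>
      \<bar>pu f y - pu f (a, b) - (Pu * fst (y - (a, b)) + Pv * snd (y - (a, b)))\<bar>
        \<le> e / 4 * norm (y - (a, b))"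
    unfolding real_norm_def by blast
  show thesis
  proof (rule that)
    show "0 < d / 2"
      using \<open>0 < d\<close> by simp
    fix \<xi> h assume "0 < h" "h < d / 2" "a \<le> \<xi>" "\<xi> \<le> a + h"
    have bound: "\<bar>pu f (\<xi>, t) - pu f (a, b) - (Pu * (\<xi> - a) + Pv * (t - b))\<bar> \<le> e / 4 * (2 * h)"
      if "t \<in> {b, b + h}" for t
    proof -
      have "norm ((\<xi>, t) - (a, b)) \<le> norm (\<xi> - a) + norm (t - b)"
        using norm_Pair_le[of "\<xi> - a" "t - b"] by simp
      also have "\<dots> \<le> 2 * h"
        using that \<open>0 < h\<close> \<open>a \<le> \<xi>\<close> \<open>\<xi> \<le> a + h\<close> by auto
      finally have "norm ((\<xi>, t) - (a, b)) \<le> 2 * h" .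
      moreover have "e / 4 * norm ((\<xi>, t) - (a, b)) \<le> e / 4 * (2 * h)"
        using calculation \<open>0 < e\<close> by (intro mult_left_mono) auto
      ultimately show ?thesis
        using d[of "(\<xi>, t)"] \<open>h < d / 2\<close> by simp
    qed
    have "\<bar>pu f (\<xi>, b) - pu f (a, b) - Pu * (\<xi> - a)\<bar> \<le> e * h / 2"
      using bound[of b] by simp
    moreover have "\<bar>pu f (\<xi>, b + h) - pu f (a, b) - (Pu * (\<xi> - a) + Pv * h)\<bar> \<le> e * h / 2"
      using bound[of "b + h"] by simp
    ultimately show "\<bar>pu f (\<xi>, b + h) - pu f (\<xi>, b) - pv (pu f) (a, b) * h\<bar> \<le> e * h"
      unfolding Pv_def[symmetric] by linarith
  qed
qed

lemma second_difference_approx: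
  fixes f :: plane_fun
  assumes "open S" "w \<in> S" and diff: "\<And>z. z \<in> S \<Longrightarrow> f differentiable (at z)"
    and "pu f differentiable (at w)" and "0 < e"
  obtains d where "0 < d"
    "\<And>h. 0 < h \<Longrightarrow> h < d \<Longrightarrow> \<bar>second_difference f w h - h\<^sup>2 * pv (pu f) w\<bar> \<le> e * h\<^sup>2"
proof -
  obtain a b where w: "w = (a, b)"
    by fastforce
  obtain d1 where "0 < d1" and d1: "\<And>\<xi> h. 0 < h \<Longrightarrow> h < d1 \<Longrightarrow> a \<le> \<xi> \<Longrightarrow> \<xi> \<le> a + h \<Longrightarrow>
      \<bar>pu f (\<xi>, b + h) - pu f (\<xi>, b) - pv (pu f) w * h\<bar> \<le> e * h"
    using pu_increment_approx[of f a b e] assms(4,5) unfolding w by blast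
  obtain r where "0 < r" "ball w r \<subseteq> S"
    using assms(1,2) openE by blast
  show thesis
  proof (rule that)
    show "0 < min d1 (r / 2)"
      using \<open>0 < d1\<close> \<open>0 < r\<close> by simp
    fix h assume "0 < h" "h < min d1 (r / 2)"
    have "f differentiable (at (s, t))" if "a \<le> s" "s \<le> a + h" "t \<in> {b, b + h}" for s t
    proof -
      have "norm ((s, t) - w) \<le> norm (s - a) + norm (t - b)"
        using norm_Pair_le[of "s - a" "t - b"] by (simp add: w)
      then have "(s, t) \<in> ball w r"
        using that \<open>h < min d1 (r / 2)\<close> by (auto simp: dist_norm norm_minus_commute)
      then show ?thesis
        using \<open>ball w r \<subseteq> S\<close> diff by blast
    qed
    then obtain \<xi> where "a < \<xi>" "\<xi> < a + h"
      and mvt: "second_difference f w h = h * (pu f (\<xi>, b + h) - pu f (\<xi>, b))"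
      using second_difference_mean_value[OF \<open>0 < h\<close>] unfolding w by blast
    have "\<bar>pu f (\<xi>, b + h) - pu f (\<xi>, b) - pv (pu f) w * h\<bar> \<le> e * h"
      using d1[of h \<xi>] \<open>0 < h\<close> \<open>h < min d1 (r / 2)\<close> \<open>a < \<xi>\<close> \<open>\<xi> < a + h\<close> by simp
    then have "h * \<bar>pu f (\<xi>, b + h) - pu f (\<xi>, b) - pv (pu f) w * h\<bar> \<le> e * h\<^sup>2"
      using \<open>0 < h\<close> by (simp add: mult_left_mono power2_eq_square mult.left_commute)
    moreover have "second_difference f w h - h\<^sup>2 * pv (pu f) w =
        h * (pu f (\<xi>, b + h) - pu f (\<xi>, b) - pv (pu f) w * h)"
      by (simp add: mvt power2_eq_square algebra_simps)
    ultimately show "\<bar>second_difference f w h - h\<^sup>2 * pv (pu f) w\<bar> \<le> e * h\<^sup>2"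
      using \<open>0 < h\<close> by (simp add: abs_mult)
  qed
qed

lemma has_derivative_swap: "(prod.swap has_derivative prod.swap) (at z)"
  unfolding prod.swap_def [abs_def]
  by (rule has_derivative_Pair has_derivative_snd[OF has_derivative_ident]
      has_derivative_fst[OF has_derivative_ident])+

lemma second_difference_approx_pv:
  fixes f :: plane_fun
  assumes "open S" "w \<in> S" and diff: "\<And>z. z \<in> S \<Longrightarrow> f differentiable (at z)"
    and "pv f differentiable (at w)" and "0 < e"
  obtains d where "0 < d"
    "\<And>h. 0 < h \<Longrightarrow> h < d \<Longrightarrow> \<bar>second_difference f w h - h\<^sup>2 * pu (pv f) w\<bar> \<le> e * h\<^sup>2"
proof -
  have swap_diff: "prod.swap differentiable (at z)" for z :: "real \<times> real"
    using has_derivative_swap by (rule differentiableI)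
  have "open (prod.swap -` S)"
    using \<open>open S\<close> by (intro continuous_open_vimage) (auto intro: continuous_intros)
  moreover have "prod.swap w \<in> prod.swap -` S"
    using \<open>w \<in> S\<close> by simp
  moreover have "f \<circ> prod.swap differentiable (at z)" if "z \<in> prod.swap -` S" for z
    using that by (intro differentiable_chain_at swap_diff diff) simp
  moreover have "pu (f \<circ> prod.swap) differentiable (at (prod.swap w))"
    unfolding pu_comp_swap by (intro differentiable_chain_at swap_diff) (simp add: assms(4))
  ultimately obtain d where "0 < d" "\<And>h. 0 < h \<Longrightarrow> h < d \<Longrightarrow>
      \<bar>second_difference (f \<circ> prod.swap) (prod.swap w) h
        - h\<^sup>2 * pv (pu (f \<circ> prod.swap)) (prod.swap w)\<bar> \<le> e * h\<^sup>2"
    using second_difference_approx[OF _ _ _ _ \<open>0 < e\<close>] by metis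
  then show thesis
    by (intro that[of d]) (simp_all add: second_difference_comp_swap pu_comp_swap pv_comp_swap)
qed

lemma pv_pu_eq_pu_pv:
  fixes f :: plane_fun
  assumes "open S" "w \<in> S" "\<And>z. z \<in> S \<Longrightarrow> f differentiable (at z)"
    and "pu f differentiable (at w)" "pv f differentiable (at w)"
  shows "pv (pu f) w = pu (pv f) w"
proof (rule ccontr)
  define \<delta> where "\<delta> = \<bar>pv (pu f) w - pu (pv f) w\<bar>"
  assume "pv (pu f) w \<noteq> pu (pv f) w"
  then have "0 < \<delta> / 4"
    by (simp add: \<delta>_def)
  obtain d1 where "0 < d1" and d1: "\<And>h. 0 < h \<Longrightarrow> h < d1 \<Longrightarrow>
      \<bar>second_difference f w h - h\<^sup>2 * pv (pu f) w\<bar> \<le> \<delta> / 4 * h\<^sup>2"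
    using second_difference_approx[OF assms(1-4) \<open>0 < \<delta> / 4\<close>] by blast
  obtain d2 where "0 < d2" and d2: "\<And>h. 0 < h \<Longrightarrow> h < d2 \<Longrightarrow>
      \<bar>second_difference f w h - h\<^sup>2 * pu (pv f) w\<bar> \<le> \<delta> / 4 * h\<^sup>2"
    using second_difference_approx_pv[OF assms(1-3,5) \<open>0 < \<delta> / 4\<close>] by blast
  define h where "h = min d1 d2 / 2"
  have "0 < h" "h < d1" "h < d2"
    using \<open>0 < d1\<close> \<open>0 < d2\<close> by (auto simp: h_def)
  have "\<bar>h\<^sup>2 * (pv (pu f) w - pu (pv f) w)\<bar> \<le>
      \<bar>second_difference f w h - h\<^sup>2 * pu (pv f) w\<bar> + \<bar>second_difference f w h - h\<^sup>2 * pv (pu f) w\<bar>"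
    using abs_triangle_ineq4[of "second_difference f w h - h\<^sup>2 * pu (pv f) w"
        "second_difference f w h - h\<^sup>2 * pv (pu f) w"]
    by (simp add: algebra_simps)
  then have "\<delta> * h\<^sup>2 \<le> \<delta> / 2 * h\<^sup>2"
    using d1[OF \<open>0 < h\<close> \<open>h < d1\<close>] d2[OF \<open>0 < h\<close> \<open>h < d2\<close>]
    by (simp add: abs_mult \<delta>_def mult.commute)
  then have "\<delta> \<le> \<delta> / 2"
    by (rule mult_right_le_imp_le) (use \<open>0 < h\<close> in simp)
  then show False
    using \<open>0 < \<delta> / 4\<close> by simp
qed

section \<open>Harmonic functions\<close>

lemma has_field_derivative_Complex_of_partials:
  fixes P Q :: plane_fun
  assumes dP: "(P has_derivative (\<lambda>h. Pu * fst h + Pv * snd h)) (at (Re z, Im z))"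
    and dQ: "(Q has_derivative (\<lambda>h. Qu * fst h + Qv * snd h)) (at (Re z, Im z))"
    and "Qv = Pu" "Pv = - Qu"
  shows "((\<lambda>z. Complex (P (Re z, Im z)) (Q (Re z, Im z))) has_field_derivative Complex Pu Qu) (at z)"
proof -
  have Re_Im: "((\<lambda>z. (Re z, Im z)) has_derivative (\<lambda>h. (Re h, Im h))) (at z)"
    by (intro has_derivative_Pair
        bounded_linear.has_derivative[OF bounded_linear_Re has_derivative_ident]
        bounded_linear.has_derivative[OF bounded_linear_Im has_derivative_ident])
  have "((\<lambda>z. P (Re z, Im z)) has_derivative (\<lambda>h. Pu * Re h + Pv * Im h)) (at z)"
    using diff_chain_at[OF Re_Im dP] by (simp add: o_def)
  moreover have "((\<lambda>z. Q (Re z, Im z)) has_derivative (\<lambda>h. Qu * Re h + Qv * Im h)) (at z)"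
    using diff_chain_at[OF Re_Im dQ] by (simp add: o_def)
  ultimately have "((\<lambda>z. of_real (P (Re z, Im z)) + \<i> * of_real (Q (Re z, Im z))) has_derivative
      (\<lambda>h. of_real (Pu * Re h + Pv * Im h) + \<i> * of_real (Qu * Re h + Qv * Im h))) (at z)"
    by (intro has_derivative_add has_derivative_mult_right has_derivative_of_real)
  moreover have "(\<lambda>h. of_real (Pu * Re h + Pv * Im h) + \<i> * of_real (Qu * Re h + Qv * Im h)) =
      (*) (Complex Pu Qu)"
    using assms(3,4) by (simp add: fun_eq_iff complex_eq_iff)
  ultimately show ?thesis
    by (simp add: has_field_derivative_def Complex_eq)
qed

lemma
  fixes \<Omega> :: "(real \<times> real) set"
  shows open_Re_Im_preimage: "open \<Omega> \<Longrightarrow> open {z. (Re z, Im z) \<in> \<Omega>}"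
    and connected_Re_Im_preimage: "connected \<Omega> \<Longrightarrow> connected {z. (Re z, Im z) \<in> \<Omega>}"
proof -
  assume "open \<Omega>"
  moreover have "{z. (Re z, Im z) \<in> \<Omega>} = (\<lambda>z. (Re z, Im z)) -` \<Omega>"
    by auto
  ultimately show "open {z. (Re z, Im z) \<in> \<Omega>}"
    by (auto intro!: continuous_open_vimage continuous_intros)
next
  assume "connected \<Omega>"
  moreover have "{z. (Re z, Im z) \<in> \<Omega>} = (\<lambda>w. of_real (fst w) + \<i> * of_real (snd w)) ` \<Omega>"
    by (force simp: complex_eq_iff)
  ultimately show "connected {z. (Re z, Im z) \<in> \<Omega>}"
    by (auto intro!: connected_continuous_image continuous_intros)
qed

lemma eventually_at_Complex_of_pair:
  assumes "\<forall>\<^sub>F z in at (Complex (fst w) (snd w)). P z"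
  shows "\<forall>\<^sub>F x in at w. P (Complex (fst x) (snd x))"
proof (rule eventually_compose_filterlim[OF assms], rule filterlim_atI)
  show "((\<lambda>x. Complex (fst x) (snd x)) \<longlongrightarrow> Complex (fst w) (snd w)) (at w)"
    by (auto simp: Complex_eq intro!: tendsto_eq_intros)
  show "\<forall>\<^sub>F x in at w. Complex (fst x) (snd x) \<noteq> Complex (fst w) (snd w)"
    using eventually_neq_at_within[of w w UNIV] by eventually_elim (auto simp: prod_eq_iff)
qed

lemma partials_zero_imp_constant:
  fixes f :: plane_fun
  assumes "open \<Omega>" "connected \<Omega>"
    and "\<And>w. w \<in> \<Omega> \<Longrightarrow> f differentiable (at w) \<and> pu f w = 0 \<and> pv f w = 0"
  shows "\<exists>c. \<forall>w\<in>\<Omega>. f w = c"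
proof -
  have "(f has_derivative (\<lambda>h. 0)) (at w)" if "w \<in> \<Omega>" for w
    using has_derivative_partials[of f w] assms(3)[OF that] by simp
  then show ?thesis
    using has_derivative_zero_unique_connected[OF assms(1,2)] by blast
qed

lemma holomorphic_on_conj_gradient:
  fixes f :: plane_fun
  assumes "open \<Omega>"
    and diff: "\<And>w. w \<in> \<Omega> \<Longrightarrow>
      f differentiable (at w) \<and> pu f differentiable (at w) \<and> pv f differentiable (at w)"
    and harmonic: "\<And>w. w \<in> \<Omega> \<Longrightarrow> pu (pu f) w + pv (pv f) w = 0"
  shows "(\<lambda>z. Complex (pu f (Re z, Im z)) (- pv f (Re z, Im z))) holomorphic_on {z. (Re z, Im z) \<in> \<Omega>}"
  unfolding holomorphic_on_open[OF open_Re_Im_preimage[OF \<open>open \<Omega>\<close>]]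
proof (intro ballI exI)
  fix z assume "z \<in> {z. (Re z, Im z) \<in> \<Omega>}"
  then have w: "(Re z, Im z) \<in> \<Omega>"
    by simp
  define w' where "w' = (Re z, Im z)"
  have "(pu f has_derivative (\<lambda>h. pu (pu f) w' * fst h + pv (pu f) w' * snd h)) (at w')"
    using diff[OF w] by (simp add: has_derivative_partials w'_def)
  moreover have "((\<lambda>x. - pv f x) has_derivative
      (\<lambda>h. (- pu (pv f) w') * fst h + (- pv (pv f) w') * snd h)) (at w')"
    using has_derivative_minus[OF has_derivative_partials[of "pv f" w']] diff[OF w]
    by (simp add: w'_def)
  moreover have "- pv (pv f) w' = pu (pu f) w'" "pv (pu f) w' = - (- pu (pv f) w')"
    using harmonic[OF w] pv_pu_eq_pu_pv[OF \<open>open \<Omega>\<close> w] diff w by (auto simp: w'_def)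
  ultimately show "((\<lambda>z. Complex (pu f (Re z, Im z)) (- pv f (Re z, Im z))) has_field_derivative
      Complex (pu (pu f) w') (- pu (pv f) w')) (at z)"
    unfolding w'_def by (rule has_field_derivative_Complex_of_partials)
qed

lemma harmonic_constant_or_isolated_critical_points:
  fixes f :: plane_fun
  assumes "open \<Omega>" "connected \<Omega>"
    and diff: "\<And>w. w \<in> \<Omega> \<Longrightarrow>
      f differentiable (at w) \<and> pu f differentiable (at w) \<and> pv f differentiable (at w)"
    and harmonic: "\<And>w. w \<in> \<Omega> \<Longrightarrow> pu (pu f) w + pv (pv f) w = 0"
  shows "(\<exists>c. \<forall>w\<in>\<Omega>. f w = c) \<or> (\<forall>w\<in>\<Omega>. \<forall>\<^sub>F z in at w. (pu f z, pv f z) \<noteq> (0, 0))"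
proof (cases "\<forall>w\<in>\<Omega>. pu f w = 0 \<and> pv f w = 0")
  case True
  then show ?thesis
    using partials_zero_imp_constant[OF assms(1,2)] diff by blast
next
  case False
  then obtain w0 where "w0 \<in> \<Omega>" and w0: "(pu f w0, pv f w0) \<noteq> (0, 0)"
    by auto
  define \<Omega>' where "\<Omega>' = {z. (Re z, Im z) \<in> \<Omega>}"
  define g where "g z = Complex (pu f (Re z, Im z)) (- pv f (Re z, Im z))" for z
  have "g holomorphic_on \<Omega>'"
    unfolding g_def \<Omega>'_def by (rule holomorphic_on_conj_gradient[OF assms(1) diff harmonic])
  moreover have "open \<Omega>'" "connected \<Omega>'"
    unfolding \<Omega>'_def using assms(1,2)
    by (simp_all add: open_Re_Im_preimage connected_Re_Im_preimage)
  moreover have "Complex (fst w0) (snd w0) \<in> \<Omega>'" "g (Complex (fst w0) (snd w0)) \<noteq> 0"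
    using \<open>w0 \<in> \<Omega>\<close> w0 by (auto simp: \<Omega>'_def g_def complex_eq_iff)
  ultimately have nonzero: "\<forall>\<^sub>F z in at (Complex (fst w) (snd w)). g z \<noteq> 0 \<and> z \<in> \<Omega>'"
    if "w \<in> \<Omega>" for w
    using that by (intro non_zero_neighbour_alt) (auto simp: \<Omega>'_def)
  have "\<forall>\<^sub>F z in at w. (pu f z, pv f z) \<noteq> (0, 0)" if "w \<in> \<Omega>" for w
    using eventually_at_Complex_of_pair[OF nonzero[OF that]]
    by eventually_elim (simp add: g_def complex_eq_iff)
  then show ?thesis
    by blast
qed

section \<open>Differentiating determinants and inverse matrices\<close>

abbreviation sq_mat :: "nat \<Rightarrow> (nat \<Rightarrow> nat \<Rightarrow> 'a) \<Rightarrow> 'a mat" where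
  "sq_mat n A \<equiv> mat n n (\<lambda>(i, j). A i j)"

lemma det_sq_mat:
  "Determinant.det (sq_mat n A) = (\<Sum>p | p permutes {..<n}. of_int (sign p) * (\<Prod>i<n. A i (p i)))"
proof -
  have "Determinant.det (sq_mat n A) =
      (\<Sum>p | p permutes {0..<n}. of_int (sign p) * (\<Prod>i = 0..<n. sq_mat n A $$ (i, p i)))"
    by (rule det_def') simp
  also have "\<dots> = (\<Sum>p | p permutes {..<n}. of_int (sign p) * (\<Prod>i<n. A i (p i)))"
    by (rule sum.cong) (auto simp: atLeast0LessThan permutes_in_image intro!: prod.cong)
  finally show ?thesis .
qed

lemma detn_eq_det: "detn n A = Determinant.det (sq_mat n A)"
  by (simp add: detn_def det_sq_mat)

lemma sum_lessThan_delta: "i < (n::nat) \<Longrightarrow> (\<Sum>k<n. if k = i then X k else 0) = X i"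
  by (subst sum.delta) simp_all

lemma sum_mult_delta:
  assumes "i < (n::nat)"
  shows "(\<Sum>k<n. X k * (if k = i then 1 else 0)) = (X i :: 'a::semiring_1)"
proof -
  have "(\<Sum>k<n. X k * (if k = i then 1 else 0)) = (\<Sum>k<n. if k = i then X k else 0)"
    by (rule sum.cong) auto
  also have "\<dots> = X i"
    by (rule sum_lessThan_delta[OF assms])
  finally show ?thesis .
qed

lemma sum_delta_mult:
  assumes "i < (n::nat)"
  shows "(\<Sum>k<n. (if i = k then 1 else 0) * X k) = (X i :: 'a::semiring_1)"
proof -
  have "(\<Sum>k<n. (if i = k then 1 else 0) * X k) = (\<Sum>k<n. if k = i then X k else 0)"
    by (rule sum.cong) auto
  also have "\<dots> = X i"
    by (rule sum_lessThan_delta[OF assms])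
  finally show ?thesis .
qed

lemma permutes_lessThan_less: "p permutes {..<n} \<Longrightarrow> i < n \<Longrightarrow> p i < n"
  using permutes_in_image[of p "{..<n}" i] by simp

lemma det_replace_row:
  assumes "k < n"
  shows "Determinant.det (sq_mat n (\<lambda>i j. if i = k then R j else A i j)) =
    (\<Sum>j<n. R j * cofactor (sq_mat n A) k j)"
proof -
  have "Determinant.det (sq_mat n (\<lambda>i j. if i = k then R j else A i j)) =
      (\<Sum>j<n. R j * cofactor (sq_mat n (\<lambda>i j. if i = k then R j else A i j)) k j)"
    using assms by (subst laplace_expansion_row[of _ n k]) (auto intro!: sum.cong)
  also have "\<dots> = (\<Sum>j<n. R j * cofactor (sq_mat n A) k j)"
  proof (intro sum.cong refl arg_cong[where f="(*) _"])
    fix j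
    show "cofactor (sq_mat n (\<lambda>i j. if i = k then R j else A i j)) k j = cofactor (sq_mat n A) k j"
      unfolding cofactor_def
      by (rule arg_cong[where f="\<lambda>M. (-1) ^ (k + j) * Determinant.det M"]) (auto simp: mat_delete_def)
  qed
  finally show ?thesis .
qed

lemma has_real_derivative_det:
  assumes "\<And>i j. i < n \<Longrightarrow> j < n \<Longrightarrow> ((\<lambda>s. F i j s) has_real_derivative F' i j) (at t)"
  shows "((\<lambda>s. Determinant.det (sq_mat n (\<lambda>i j. F i j s))) has_real_derivative
           (\<Sum>i<n. \<Sum>j<n. F' i j * cofactor (sq_mat n (\<lambda>i j. F i j t)) i j)) (at t)"
proof -
  let ?P = "{p. p permutes {..<n}}"
  have "((\<lambda>s. \<Sum>p\<in>?P. of_int (sign p) * (\<Prod>i<n. F i (p i) s)) has_real_derivative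
      (\<Sum>p\<in>?P. of_int (sign p) * (\<Sum>k<n. F' k (p k) * (\<Prod>i\<in>{..<n}-{k}. F i (p i) t)))) (at t)"
    by (intro DERIV_sum DERIV_cmult has_field_derivative_prod assms) (auto simp: permutes_lessThan_less)
  moreover have "F' k (p k) * (\<Prod>i\<in>{..<n}-{k}. F i (p i) t) =
      (\<Prod>i<n. if i = k then F' k (p i) else F i (p i) t)" if "k < n" for k p
    using that by (subst prod.remove[of _ k]) (auto intro!: prod.cong)
  ultimately have "((\<lambda>s. Determinant.det (sq_mat n (\<lambda>i j. F i j s))) has_real_derivative
      (\<Sum>k<n. Determinant.det (sq_mat n (\<lambda>i j. if i = k then F' k j else F i j t)))) (at t)"
    by (simp add: det_sq_mat sum_distrib_left if_distrib sum.swap[of _ ?P] cong: if_cong)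
  then show ?thesis
    by (simp add: det_replace_row)
qed

lemma differentiable_det:
  fixes F :: "nat \<Rightarrow> nat \<Rightarrow> 'a::real_normed_vector \<Rightarrow> real"
  assumes "\<And>i j. i < n \<Longrightarrow> j < n \<Longrightarrow> F i j differentiable (at x)"
  shows "(\<lambda>y. Determinant.det (sq_mat n (\<lambda>i j. F i j y))) differentiable (at x)"
proof -
  have "(\<lambda>y. \<Prod>i<n. F i (p i) y) differentiable (at x)" if "p permutes {..<n}" for p
  proof -
    have "\<exists>D. (F i (p i) has_derivative D) (at x)" if "i \<in> {..<n}" for i
      using assms[of i "p i"] permutes_lessThan_less[OF \<open>p permutes _\<close>] that
      by (auto simp: differentiable_def)
    then obtain D where D: "\<And>i. i \<in> {..<n} \<Longrightarrow> (F i (p i) has_derivative D i) (at x)"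
      by metis
    show ?thesis
      by (rule differentiableI, rule has_derivative_prod) (rule D)
  qed
  then show ?thesis
    unfolding det_sq_mat
    by (auto intro!: differentiable_sum differentiable_mult simp: finite_permutations)
qed

lemma differentiable_cofactor:
  fixes F :: "nat \<Rightarrow> nat \<Rightarrow> 'a::real_normed_vector \<Rightarrow> real"
  assumes "\<And>i j. i < n \<Longrightarrow> j < n \<Longrightarrow> F i j differentiable (at x)" "a < n" "b < n"
  shows "(\<lambda>y. cofactor (sq_mat n (\<lambda>i j. F i j y)) a b) differentiable (at x)"
proof -
  have "mat_delete (sq_mat n A) a b =
      sq_mat (n - 1) (\<lambda>i j. A (if i < a then i else Suc i) (if j < b then j else Suc j))"
    for A :: "nat \<Rightarrow> nat \<Rightarrow> real"
    using assms by (auto simp: mat_delete_def)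
  moreover have "(\<lambda>y. Determinant.det (sq_mat (n - 1)
      (\<lambda>i j. F (if i < a then i else Suc i) (if j < b then j else Suc j) y))) differentiable (at x)"
    using assms by (intro differentiable_det assms) auto
  ultimately show ?thesis
    by (simp add: cofactor_def)
qed

definition inv_mat :: "nat \<Rightarrow> (nat \<Rightarrow> nat \<Rightarrow> real) \<Rightarrow> nat \<Rightarrow> nat \<Rightarrow> real" where
  "inv_mat n A i j = cofactor (sq_mat n A) j i / Determinant.det (sq_mat n A)"

lemma sum_mult_inv_mat:
  assumes "Determinant.det (sq_mat n A) \<noteq> 0" "i < n" "j < n"
  shows "(\<Sum>k<n. A i k * inv_mat n A k j) = (if i = j then 1 else 0)"
proof -
  have "(\<Sum>k<n. A i k * cofactor (sq_mat n A) j k) = (sq_mat n A * adj_mat (sq_mat n A)) $$ (i, j)"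
    using assms by (auto simp: times_mat_def scalar_prod_def adj_mat_def intro: sum.cong)
  also have "\<dots> = (if i = j then Determinant.det (sq_mat n A) else 0)"
    using adj_mat(2)[of "sq_mat n A" n] assms by simp
  finally show ?thesis
    using assms(1) by (simp add: inv_mat_def sum_divide_distrib[symmetric])
qed

lemma sum_inv_mat_mult:
  assumes "Determinant.det (sq_mat n A) \<noteq> 0" "i < n" "j < n"
  shows "(\<Sum>k<n. inv_mat n A i k * A k j) = (if i = j then 1 else 0)"
proof -
  have "(\<Sum>k<n. cofactor (sq_mat n A) k i * A k j) = (adj_mat (sq_mat n A) * sq_mat n A) $$ (i, j)"
    using assms by (auto simp: times_mat_def scalar_prod_def adj_mat_def intro: sum.cong)
  also have "\<dots> = (if i = j then Determinant.det (sq_mat n A) else 0)"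
    using adj_mat(3)[of "sq_mat n A" n] assms by simp
  finally show ?thesis
    using assms(1) by (simp add: inv_mat_def sum_divide_distrib[symmetric])
qed

lemma left_inverse_solve:
  fixes L A X Y :: "nat \<Rightarrow> nat \<Rightarrow> 'a::comm_semiring_1"
  assumes "\<And>i j. i < n \<Longrightarrow> j < n \<Longrightarrow> (\<Sum>k<n. L i k * A k j) = (if i = j then 1 else 0)"
    and "\<And>a. a < n \<Longrightarrow> (\<Sum>k<n. A a k * X k b) = Y a b" and "i < n"
  shows "X i b = (\<Sum>a<n. L i a * Y a b)"
proof -
  have "(\<Sum>a<n. L i a * Y a b) = (\<Sum>a<n. L i a * (\<Sum>k<n. A a k * X k b))"
    by (intro sum.cong refl) (simp add: assms(2))
  also have "\<dots> = (\<Sum>a<n. \<Sum>k<n. L i a * A a k * X k b)"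
    by (simp add: sum_distrib_left mult.assoc)
  also have "\<dots> = (\<Sum>k<n. (\<Sum>a<n. L i a * A a k) * X k b)"
    by (subst sum.swap) (simp add: sum_distrib_right)
  also have "\<dots> = X i b"
    using assms(1,3) by (simp add: sum_delta_mult)
  finally show ?thesis ..
qed

lemma inv_mat_sym:
  assumes "Determinant.det (sq_mat n A) \<noteq> 0" "\<And>i j. i < n \<Longrightarrow> j < n \<Longrightarrow> A i j = A j i"
    and "i < n" "j < n"
  shows "inv_mat n A i j = inv_mat n A j i"
proof -
  have transposed: "(\<Sum>k<n. A a k * inv_mat n A j k) = (if j = a then 1 else 0)" if "a < n" for a
    using sum_inv_mat_mult[OF assms(1) \<open>j < n\<close> that] that assms(2)
    by (simp add: mult.commute)
  have "inv_mat n A j i = (\<Sum>a<n. inv_mat n A i a * (if j = a then 1 else 0))"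
    by (rule left_inverse_solve[where L="inv_mat n A" and A=A and X="\<lambda>k j. inv_mat n A j k"])
      (simp_all add: sum_inv_mat_mult[OF assms(1)] transposed \<open>i < n\<close>)
  then show ?thesis
    using \<open>j < n\<close> by (simp add: sum_mult_delta eq_commute[of j])
qed

lemma differentiable_inv_mat:
  fixes F :: "nat \<Rightarrow> nat \<Rightarrow> 'a::real_normed_vector \<Rightarrow> real"
  assumes "\<And>i j. i < n \<Longrightarrow> j < n \<Longrightarrow> F i j differentiable (at x)" "a < n" "b < n"
    and "Determinant.det (sq_mat n (\<lambda>i j. F i j x)) \<noteq> 0"
  shows "(\<lambda>y. inv_mat n (\<lambda>i j. F i j y) a b) differentiable (at x)"
  unfolding inv_mat_def using assms
  by (intro differentiable_divide differentiable_cofactor differentiable_det) auto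

lemma inv_mat_derivative_eq:
  assumes der: "\<And>i j. i < n \<Longrightarrow> j < n \<Longrightarrow> ((\<lambda>s. F i j s) has_real_derivative F' i j) (at t)"
    and nz: "Determinant.det (sq_mat n (\<lambda>i j. F i j t)) \<noteq> 0"
    and X: "\<And>a b. a < n \<Longrightarrow> b < n \<Longrightarrow>
      ((\<lambda>s. inv_mat n (\<lambda>i j. F i j s) a b) has_real_derivative X a b) (at t)"
    and "i < n" "j < n"
  shows "X i j = - (\<Sum>a<n. \<Sum>k<n. inv_mat n (\<lambda>i j. F i j t) i a * F' a k * inv_mat n (\<lambda>i j. F i j t) k j)"
proof -
  define I where "I s = inv_mat n (\<lambda>i j. F i j s)" for s
  have "\<forall>\<^sub>F s in nhds t. Determinant.det (sq_mat n (\<lambda>i j. F i j s)) \<noteq> 0"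
    using DERIV_isCont[OF has_real_derivative_det[where n=n and F=F and F'=F' and t=t, OF der]] nz
    by (simp add: isCont_def tendsto_imp_eventually_ne eventually_nhds_conv_at)
  \<comment> \<open>Differentiate the identity F(s) I(s) = 1 at t.\<close>
  then have product_rule: "(\<Sum>k<n. F a k t * X k b) = - (\<Sum>k<n. F' a k * I t k b)"
    if "a < n" "b < n" for a b
  proof -
    have "((\<lambda>s. \<Sum>k<n. F a k s * I s k b) has_real_derivative
        (\<Sum>k<n. F' a k * I t k b + X k b * F a k t)) (at t)"
      using that by (intro DERIV_sum DERIV_mult der X[unfolded I_def[symmetric]]) auto
    moreover have "\<forall>\<^sub>F s in nhds t. (\<Sum>k<n. F a k s * I s k b) = (if a = b then 1 else 0)"
      using \<open>\<forall>\<^sub>F s in nhds t. _\<close>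
    proof eventually_elim
      case (elim s)
      then show ?case
        using sum_mult_inv_mat[of n "\<lambda>i j. F i j s" a b] that by (simp add: I_def)
    qed
    then have "((\<lambda>s. \<Sum>k<n. F a k s * I s k b) has_real_derivative 0) (at t)"
      by (subst DERIV_cong_ev[OF refl _ refl]) (auto intro: DERIV_const)
    ultimately have "(\<Sum>k<n. F' a k * I t k b) + (\<Sum>k<n. X k b * F a k t) = 0"
      by (simp add: DERIV_unique sum.distrib)
    moreover have "(\<Sum>k<n. X k b * F a k t) = (\<Sum>k<n. F a k t * X k b)"
      by (simp add: mult.commute)
    ultimately show ?thesis
      by linarith
  qed
  have "X i j = (\<Sum>a<n. I t i a * - (\<Sum>k<n. F' a k * I t k j))"
    using nz \<open>i < n\<close> \<open>j < n\<close> product_rule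
    by (intro left_inverse_solve[where A="\<lambda>a k. F a k t"])
      (auto simp: I_def sum_inv_mat_mult[of n "\<lambda>i j. F i j t"])
  then show ?thesis
    by (simp add: I_def sum_distrib_left sum_negf mult.assoc)
qed

lemma has_real_derivative_inv_mat:
  assumes der: "\<And>i j. i < n \<Longrightarrow> j < n \<Longrightarrow> ((\<lambda>s. F i j s) has_real_derivative F' i j) (at t)"
    and nz: "Determinant.det (sq_mat n (\<lambda>i j. F i j t)) \<noteq> 0" and "i < n" "j < n"
  shows "((\<lambda>s. inv_mat n (\<lambda>i j. F i j s) i j) has_real_derivative
     - (\<Sum>a<n. \<Sum>k<n. inv_mat n (\<lambda>i j. F i j t) i a * F' a k * inv_mat n (\<lambda>i j. F i j t) k j)) (at t)"
proof -
  have "\<exists>D. ((\<lambda>s. inv_mat n (\<lambda>i j. F i j s) a b) has_real_derivative D) (at t)"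
    if "a < n" "b < n" for a b
    using differentiable_inv_mat[of n F t a b] der nz that
    by (auto simp: real_differentiable_def)
  then obtain X where X: "\<And>a b. a < n \<Longrightarrow> b < n \<Longrightarrow>
      ((\<lambda>s. inv_mat n (\<lambda>i j. F i j s) a b) has_real_derivative X a b) (at t)"
    by metis
  show ?thesis
    using X[OF \<open>i < n\<close> \<open>j < n\<close>] inv_mat_derivative_eq[OF der nz X \<open>i < n\<close> \<open>j < n\<close>] by simp
qed

lemma sum_swap3:
  "(\<Sum>a\<in>A. \<Sum>b\<in>B. \<Sum>c\<in>C. f a b c) = (\<Sum>c\<in>C. \<Sum>b\<in>B. \<Sum>a\<in>A. f a b c)"
proof -
  have "(\<Sum>a\<in>A. \<Sum>b\<in>B. \<Sum>c\<in>C. f a b c) = (\<Sum>b\<in>B. \<Sum>a\<in>A. \<Sum>c\<in>C. f a b c)"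
    by (rule sum.swap)
  also have "\<dots> = (\<Sum>b\<in>B. \<Sum>c\<in>C. \<Sum>a\<in>A. f a b c)"
    by (rule sum.cong[OF refl], rule sum.swap)
  also have "\<dots> = (\<Sum>c\<in>C. \<Sum>b\<in>B. \<Sum>a\<in>A. f a b c)"
    by (rule sum.swap)
  finally show ?thesis .
qed

lemma sum_sym_swap:
  fixes H M :: "nat \<Rightarrow> nat \<Rightarrow> real"
  assumes sym: "\<And>i j. i < n \<Longrightarrow> j < n \<Longrightarrow> H i j = H j i"
  shows "(\<Sum>i<n. \<Sum>j<n. H i j * M i j) = (\<Sum>k<n. \<Sum>d<n. H k d * M d k)"
proof -
  have "(\<Sum>i<n. \<Sum>j<n. H i j * M i j) = (\<Sum>i<n. \<Sum>j<n. H j i * M i j)"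
    by (intro sum.cong refl) (simp add: sym)
  also have "\<dots> = (\<Sum>k<n. \<Sum>d<n. H k d * M d k)"
    by (rule sum.swap)
  finally show ?thesis .
qed

lemma trace_sym_products:
  fixes H M :: "nat \<Rightarrow> nat \<Rightarrow> real"
  assumes sym: "\<And>i j. i < n \<Longrightarrow> j < n \<Longrightarrow> H i j = H j i"
  defines "A \<equiv> \<lambda>k j. \<Sum>d<n. H k d * M d j"
  shows "(\<Sum>i<n. \<Sum>j<n. H i j * (\<Sum>k<n. A k j * M i k)) = (\<Sum>j<n. \<Sum>k<n. A j k * A k j)"
    and "(\<Sum>i<n. \<Sum>j<n. H i j * (\<Sum>k<n. M j k * A k i)) = (\<Sum>j<n. \<Sum>k<n. A j k * A k j)"
proof -
  have "(\<Sum>i<n. \<Sum>j<n. H i j * (\<Sum>k<n. A k j * M i k)) = (\<Sum>i<n. \<Sum>j<n. \<Sum>k<n. H i j * A k j * M i k)"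
    by (simp add: sum_distrib_left mult.assoc)
  also have "\<dots> = (\<Sum>k<n. \<Sum>j<n. \<Sum>i<n. H i j * A k j * M i k)"
    by (rule sum_swap3)
  also have "\<dots> = (\<Sum>j<n. \<Sum>k<n. A j k * A k j)"
    unfolding A_def by (intro sum.cong refl) (simp add: sum_distrib_left sym mult_ac)
  finally show "(\<Sum>i<n. \<Sum>j<n. H i j * (\<Sum>k<n. A k j * M i k)) = (\<Sum>j<n. \<Sum>k<n. A j k * A k j)" .
  have "(\<Sum>i<n. \<Sum>j<n. H i j * (\<Sum>k<n. M j k * A k i)) = (\<Sum>i<n. \<Sum>j<n. \<Sum>k<n. H i j * M j k * A k i)"
    by (simp add: sum_distrib_left mult.assoc)
  also have "\<dots> = (\<Sum>i<n. \<Sum>k<n. \<Sum>j<n. H i j * M j k * A k i)"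
    by (rule sum.cong[OF refl], rule sum.swap)
  also have "\<dots> = (\<Sum>i<n. \<Sum>k<n. A i k * A k i)"
    unfolding A_def by (intro sum.cong refl) (simp add: sum_distrib_right)
  finally show "(\<Sum>i<n. \<Sum>j<n. H i j * (\<Sum>k<n. M j k * A k i)) = (\<Sum>j<n. \<Sum>k<n. A j k * A k j)" .
qed

lemma trace_ricci_fiber_form:
  fixes H M N :: "nat \<Rightarrow> nat \<Rightarrow> real"
  assumes sym: "\<And>i j. i < n \<Longrightarrow> j < n \<Longrightarrow> H i j = H j i"
  defines "A \<equiv> \<lambda>k j. \<Sum>d<n. H k d * M d j"
  defines "T \<equiv> \<Sum>k<n. A k k"
  defines "S \<equiv> \<Sum>j<n. \<Sum>k<n. A j k * A k j"
  shows "(\<Sum>i<n. \<Sum>j<n. H i j * (2 * N i j + T * M i j - (\<Sum>k<n. A k j * M i k + M j k * A k i)))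
    = 2 * (\<Sum>k<n. \<Sum>d<n. H k d * N d k) + T * T - 2 * S"
proof -
  have "(\<Sum>i<n. \<Sum>j<n. H i j * (2 * N i j + T * M i j - (\<Sum>k<n. A k j * M i k + M j k * A k i)))
      = 2 * (\<Sum>i<n. \<Sum>j<n. H i j * N i j) + T * (\<Sum>i<n. \<Sum>j<n. H i j * M i j)
        - (\<Sum>i<n. \<Sum>j<n. H i j * (\<Sum>k<n. A k j * M i k))
        - (\<Sum>i<n. \<Sum>j<n. H i j * (\<Sum>k<n. M j k * A k i))"
    by (simp add: algebra_simps sum.distrib sum_subtractf sum_distrib_left)
  also have "\<dots> = 2 * (\<Sum>k<n. \<Sum>d<n. H k d * N d k) + T * T - 2 * S"
    using sum_sym_swap[OF sym, where M=N] sum_sym_swap[OF sym, where M=M]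
      trace_sym_products[OF sym, where M=M]
    unfolding A_def T_def S_def by simp
  finally show ?thesis .
qed

section \<open>Christoffel symbols and Ricci tensor of the block metric\<close>

(* The components of warped_metric depend only on (u, v) = (p n, p (Suc n)). The block_*
   functions are its metric, inverse metric, Christoffel symbols and Ricci tensor written as
   functions on the (u, v)-plane, so that partial derivatives become pu and pv. *)

definition block_metric ::
    "nat \<Rightarrow> (nat \<Rightarrow> nat \<Rightarrow> plane_fun) \<Rightarrow> plane_fun \<Rightarrow> nat \<Rightarrow> nat \<Rightarrow> plane_fun" where
  "block_metric n G C a b =
     (if a < n \<and> b < n then G a b else if a = b \<and> (a = n \<or> a = Suc n) then C else (\<lambda>_. 0))"

definition coord_partial :: "nat \<Rightarrow> nat \<Rightarrow> plane_fun \<Rightarrow> plane_fun" where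
  "coord_partial n a H w = (if a = n then pu H w else if a = Suc n then pv H w else 0)"

definition block_inv_metric ::
    "nat \<Rightarrow> (nat \<Rightarrow> nat \<Rightarrow> plane_fun) \<Rightarrow> plane_fun \<Rightarrow> real \<times> real \<Rightarrow> nat \<Rightarrow> nat \<Rightarrow> real" where
  "block_inv_metric n G C w = (SOME h. \<forall>i<n+2. \<forall>j<n+2.
     (\<Sum>c<n+2. block_metric n G C i c w * h c j) = (if i = j then 1 else 0))"

definition block_christoffel ::
    "nat \<Rightarrow> (nat \<Rightarrow> nat \<Rightarrow> plane_fun) \<Rightarrow> plane_fun \<Rightarrow> nat \<Rightarrow> nat \<Rightarrow> nat \<Rightarrow> plane_fun" where
  "block_christoffel n G C a b c w = (1/2) * (\<Sum>d<n+2. block_inv_metric n G C w a d *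
     (coord_partial n b (block_metric n G C d c) w + coord_partial n c (block_metric n G C d b) w
      - coord_partial n d (block_metric n G C b c) w))"

definition block_ricci ::
    "nat \<Rightarrow> (nat \<Rightarrow> nat \<Rightarrow> plane_fun) \<Rightarrow> plane_fun \<Rightarrow> nat \<Rightarrow> nat \<Rightarrow> plane_fun" where
  "block_ricci n G C b d w =
     (\<Sum>a<n+2. coord_partial n a (block_christoffel n G C a b d) w)
     - (\<Sum>a<n+2. coord_partial n d (block_christoffel n G C a b a) w)
     + (\<Sum>a<n+2. \<Sum>e<n+2. block_christoffel n G C a a e w * block_christoffel n G C e b d w)
     - (\<Sum>a<n+2. \<Sum>e<n+2. block_christoffel n G C a d e w * block_christoffel n G C e b a w)"

lemma warped_metric_eq_block_metric:
  "warped_metric n G C a b p = block_metric n G C a b (p n, p (Suc n))"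
  by (auto simp: warped_metric_def block_metric_def)

lemma pd_eq_coord_partial:
  assumes "\<And>p. F p = H (p n, p (Suc n))"
  shows "pd a F p = coord_partial n a H (p n, p (Suc n))"
proof -
  consider "a = n" | "a = Suc n" | "a \<noteq> n" "a \<noteq> Suc n"
    by blast
  then show ?thesis
    by cases (simp_all add: pd_def assms coord_partial_def pu_def pv_def)
qed

lemma inv_metric_warped_metric:
  "inv_metric (n+2) (warped_metric n G C) a b p = block_inv_metric n G C (p n, p (Suc n)) a b"
  by (simp add: inv_metric_def block_inv_metric_def warped_metric_eq_block_metric)

lemma pd_warped_metric:
  "pd a (warped_metric n G C d c) p = coord_partial n a (block_metric n G C d c) (p n, p (Suc n))"
  by (rule pd_eq_coord_partial) (rule warped_metric_eq_block_metric)

lemma christoffel_warped_metric: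
  "christoffel (n+2) (warped_metric n G C) a b c p = block_christoffel n G C a b c (p n, p (Suc n))"
  unfolding christoffel_def block_christoffel_def inv_metric_warped_metric pd_warped_metric ..

lemma pd_christoffel_warped_metric:
  "pd x (christoffel (n+2) (warped_metric n G C) a b c) p =
     coord_partial n x (block_christoffel n G C a b c) (p n, p (Suc n))"
  by (rule pd_eq_coord_partial) (rule christoffel_warped_metric)

lemma ricci_warped_metric:
  "ricci (n+2) (warped_metric n G C) b d p = block_ricci n G C b d (p n, p (Suc n))"
  unfolding ricci_def block_ricci_def christoffel_warped_metric pd_christoffel_warped_metric ..

lemma sum_lessThan_add2: "(\<Sum>c<n+2. f c) = (\<Sum>c<n. f c) + f n + (f (Suc n) :: real)"
  by (simp add: add.assoc)

lemma block_metric_apply: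
  "block_metric n G C a b w =
     (if a < n \<and> b < n then G a b w else if a = b \<and> (a = n \<or> a = Suc n) then C w else 0)"
  by (auto simp: block_metric_def)

lemma coord_partial_block_metric:
  "coord_partial n x (block_metric n G C a b) w =
     (if a < n \<and> b < n then coord_partial n x (G a b) w
      else if a = b \<and> (a = n \<or> a = Suc n) then coord_partial n x C w else 0)"
  by (auto simp: block_metric_def coord_partial_def pu_def pv_def)

lemma coord_partial_fiber: "x < n \<Longrightarrow> coord_partial n x H w = 0"
  by (simp add: coord_partial_def)

locale nondegenerate_block_metric =
  fixes n :: nat and G :: "nat \<Rightarrow> nat \<Rightarrow> plane_fun" and C :: plane_fun
    and \<Omega> :: "(real \<times> real) set"
  assumes open_domain: "open \<Omega>"
    and det_G_nonzero: "\<And>w. w \<in> \<Omega> \<Longrightarrow> Determinant.det (sq_mat n (\<lambda>i j. G i j w)) \<noteq> 0"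
    and C_nonzero: "\<And>w. w \<in> \<Omega> \<Longrightarrow> C w \<noteq> 0"
    and G_sym: "\<And>i j w. i < n \<Longrightarrow> j < n \<Longrightarrow> w \<in> \<Omega> \<Longrightarrow> G i j w = G j i w"
begin

definition Ginv :: "real \<times> real \<Rightarrow> nat \<Rightarrow> nat \<Rightarrow> real" where
  "Ginv w = inv_mat n (\<lambda>i j. G i j w)"

lemma sum_G_Ginv:
  "w \<in> \<Omega> \<Longrightarrow> i < n \<Longrightarrow> j < n \<Longrightarrow> (\<Sum>k<n. G i k w * Ginv w k j) = (if i = j then 1 else 0)"
  unfolding Ginv_def
  by (rule sum_mult_inv_mat[where A="\<lambda>i j. G i j w"]) (simp_all add: det_G_nonzero)

lemma sum_Ginv_G:
  "w \<in> \<Omega> \<Longrightarrow> i < n \<Longrightarrow> j < n \<Longrightarrow> (\<Sum>k<n. Ginv w i k * G k j w) = (if i = j then 1 else 0)"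
  unfolding Ginv_def
  by (rule sum_inv_mat_mult[where A="\<lambda>i j. G i j w"]) (simp_all add: det_G_nonzero)

lemma Ginv_sym: "w \<in> \<Omega> \<Longrightarrow> i < n \<Longrightarrow> j < n \<Longrightarrow> Ginv w i j = Ginv w j i"
  unfolding Ginv_def by (rule inv_mat_sym) (simp_all add: det_G_nonzero G_sym)

definition block_inverse :: "real \<times> real \<Rightarrow> nat \<Rightarrow> nat \<Rightarrow> real" where
  "block_inverse w a b =
     (if a < n \<and> b < n then Ginv w a b else if a = b \<and> (a = n \<or> a = Suc n) then 1 / C w else 0)"

lemma sum_block_metric_block_inverse:
  assumes "w \<in> \<Omega>" "i < n+2" "j < n+2"
  shows "(\<Sum>c<n+2. block_metric n G C i c w * block_inverse w c j) = (if i = j then 1 else 0)"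
proof -
  have "i < n \<or> i = n \<or> i = Suc n" "j < n \<or> j = n \<or> j = Suc n"
    using assms by linarith+
  then show ?thesis
    unfolding sum_lessThan_add2 using sum_G_Ginv[OF assms(1)] C_nonzero[OF assms(1)]
    by (elim disjE) (auto simp: block_metric_apply block_inverse_def)
qed

lemma sum_block_inverse_block_metric:
  assumes "w \<in> \<Omega>" "i < n+2" "j < n+2"
  shows "(\<Sum>c<n+2. block_inverse w i c * block_metric n G C c j w) = (if i = j then 1 else 0)"
proof -
  have "i < n \<or> i = n \<or> i = Suc n" "j < n \<or> j = n \<or> j = Suc n"
    using assms by linarith+
  then show ?thesis
    unfolding sum_lessThan_add2 using sum_Ginv_G[OF assms(1)] C_nonzero[OF assms(1)]
    by (elim disjE) (auto simp: block_metric_apply block_inverse_def)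
qed

lemma block_inv_metric_eq:
  assumes "w \<in> \<Omega>" "a < n+2" "b < n+2"
  shows "block_inv_metric n G C w a b = block_inverse w a b"
proof -
  define h where "h = block_inv_metric n G C w"
  have "\<forall>i<n+2. \<forall>j<n+2. (\<Sum>c<n+2. block_metric n G C i c w * h c j) = (if i = j then 1 else 0)"
    unfolding h_def block_inv_metric_def
    by (rule someI[where x="block_inverse w"])
      (use sum_block_metric_block_inverse[OF assms(1)] in blast)
  then have right_inverse: "\<And>i. i < n+2 \<Longrightarrow>
      (\<Sum>c<n+2. block_metric n G C i c w * h c b) = (if i = b then 1 else 0)"
    using assms(3) by blast
  have "h a b = (\<Sum>i<n+2. block_inverse w a i * (if i = b then 1 else 0))"
    using left_inverse_solve[where L="block_inverse w" and A="\<lambda>i c. block_metric n G C i c w"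
        and X=h and b=b and Y="\<lambda>i j. if i = j then 1 else 0",
        OF sum_block_inverse_block_metric[OF assms(1)] right_inverse assms(2)] .
  then show ?thesis
    unfolding h_def sum_mult_delta[OF assms(3)] .
qed

lemma block_christoffel_expand:
  assumes "w \<in> \<Omega>" "a < n+2"
  shows "block_christoffel n G C a b c w = (1/2) * (\<Sum>d<n+2. block_inverse w a d *
     (coord_partial n b (block_metric n G C d c) w + coord_partial n c (block_metric n G C d b) w
      - coord_partial n d (block_metric n G C b c) w))"
  unfolding block_christoffel_def using block_inv_metric_eq[OF assms] by simp

text \<open>In the remaining lemmas, indices below n are fibre directions and n, Suc n are the
  (u, v)-directions.\<close>

lemma christoffel_plane_fiber_fiber:
  assumes "w \<in> \<Omega>" "\<alpha> = n \<or> \<alpha> = Suc n" "i < n" "j < n"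
  shows "block_christoffel n G C \<alpha> i j w = - (1/2) * coord_partial n \<alpha> (G i j) w / C w"
  using assms C_nonzero[OF assms(1)]
  by (auto simp: block_christoffel_expand sum_lessThan_add2 block_inverse_def
      coord_partial_block_metric coord_partial_fiber)

lemma christoffel_fiber_fiber_fiber:
  assumes "w \<in> \<Omega>" "i < n" "j < n" "k < n"
  shows "block_christoffel n G C k i j w = 0"
  using assms
  by (auto simp: block_christoffel_expand sum_lessThan_add2 block_inverse_def
      coord_partial_block_metric coord_partial_fiber)

lemma christoffel_fiber_fiber_plane:
  assumes "w \<in> \<Omega>" "\<beta> = n \<or> \<beta> = Suc n" "j < n" "k < n"
  shows "block_christoffel n G C k j \<beta> w = (1/2) * (\<Sum>d<n. Ginv w k d * coord_partial n \<beta> (G d j) w)"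
  using assms
  by (auto simp: block_christoffel_expand sum_lessThan_add2 block_inverse_def
      coord_partial_block_metric coord_partial_fiber intro!: sum.cong)

lemma christoffel_plane_fiber_plane:
  assumes "w \<in> \<Omega>" "\<alpha> = n \<or> \<alpha> = Suc n" "\<beta> = n \<or> \<beta> = Suc n" "j < n"
  shows "block_christoffel n G C \<alpha> j \<beta> w = 0"
  using assms
  by (auto simp: block_christoffel_expand sum_lessThan_add2 block_inverse_def
      coord_partial_block_metric coord_partial_fiber)

lemma christoffel_plane_plane_plane_diag:
  assumes "w \<in> \<Omega>" "\<alpha> = n \<or> \<alpha> = Suc n" "\<beta> = n \<or> \<beta> = Suc n"
  shows "block_christoffel n G C \<alpha> \<alpha> \<beta> w = (1/2) * coord_partial n \<beta> C w / C w"
  using assms C_nonzero[OF assms(1)]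
  by (auto simp: block_christoffel_expand sum_lessThan_add2 block_inverse_def
      coord_partial_block_metric coord_partial_fiber)

definition ricci_fiber_part :: "nat \<Rightarrow> nat \<Rightarrow> nat \<Rightarrow> plane_fun" where
  "ricci_fiber_part \<beta> i j w =
     coord_partial n \<beta> (block_christoffel n G C \<beta> i j) w
     + (\<Sum>a<n+2. block_christoffel n G C a a \<beta> w) * block_christoffel n G C \<beta> i j w
     - (\<Sum>k<n. block_christoffel n G C k j \<beta> w * block_christoffel n G C \<beta> i k w
              + block_christoffel n G C \<beta> j k w * block_christoffel n G C k i \<beta> w)"

lemma block_ricci_fiber:
  assumes w: "w \<in> \<Omega>" and ij: "i < n" "j < n"
  shows "block_ricci n G C i j w = ricci_fiber_part n i j w + ricci_fiber_part (Suc n) i j w"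
proof -
  let ?\<Gamma> = "\<lambda>a b c. block_christoffel n G C a b c w"
  have derivatives: "(\<Sum>a<n+2. coord_partial n a (block_christoffel n G C a i j) w) =
      coord_partial n n (block_christoffel n G C n i j) w
      + coord_partial n (Suc n) (block_christoffel n G C (Suc n) i j) w"
    "(\<Sum>a<n+2. coord_partial n j (block_christoffel n G C a i a) w) = 0"
    using ij by (simp_all add: sum_lessThan_add2 coord_partial_fiber)
  have "(\<Sum>a<n+2. \<Sum>e<n+2. ?\<Gamma> a a e * ?\<Gamma> e i j) = (\<Sum>e<n+2. (\<Sum>a<n+2. ?\<Gamma> a a e) * ?\<Gamma> e i j)"
    by (simp only: sum_distrib_right) (rule sum.swap)
  also have "\<dots> = (\<Sum>a<n+2. ?\<Gamma> a a n) * ?\<Gamma> n i j + (\<Sum>a<n+2. ?\<Gamma> a a (Suc n)) * ?\<Gamma> (Suc n) i j"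
    unfolding sum_lessThan_add2[of _ n] using christoffel_fiber_fiber_fiber[OF w ij] by simp
  finally have contracted: "(\<Sum>a<n+2. \<Sum>e<n+2. ?\<Gamma> a a e * ?\<Gamma> e i j) =
      (\<Sum>a<n+2. ?\<Gamma> a a n) * ?\<Gamma> n i j + (\<Sum>a<n+2. ?\<Gamma> a a (Suc n)) * ?\<Gamma> (Suc n) i j" .
  have fiber_row: "(\<Sum>e<n+2. ?\<Gamma> a j e * ?\<Gamma> e i a) =
      ?\<Gamma> a j n * ?\<Gamma> n i a + ?\<Gamma> a j (Suc n) * ?\<Gamma> (Suc n) i a" if "a < n" for a
    unfolding sum_lessThan_add2 using christoffel_fiber_fiber_fiber[OF w ij(1) that] by simp
  have plane_row: "(\<Sum>e<n+2. ?\<Gamma> \<alpha> j e * ?\<Gamma> e i \<alpha>) = (\<Sum>e<n. ?\<Gamma> \<alpha> j e * ?\<Gamma> e i \<alpha>)"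
    if "\<alpha> = n \<or> \<alpha> = Suc n" for \<alpha>
    unfolding sum_lessThan_add2 using christoffel_plane_fiber_plane[OF w that _ ij(2)] by simp
  have "(\<Sum>a<n+2. \<Sum>e<n+2. ?\<Gamma> a j e * ?\<Gamma> e i a) =
      (\<Sum>k<n. ?\<Gamma> k j n * ?\<Gamma> n i k + ?\<Gamma> n j k * ?\<Gamma> k i n)
      + (\<Sum>k<n. ?\<Gamma> k j (Suc n) * ?\<Gamma> (Suc n) i k + ?\<Gamma> (Suc n) j k * ?\<Gamma> k i (Suc n))"
    unfolding sum_lessThan_add2[of _ n] using fiber_row plane_row[of n] plane_row[of "Suc n"]
    by (simp add: sum.distrib)
  then show ?thesis
    unfolding block_ricci_def ricci_fiber_part_def derivatives contracted by simp
qed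

end

section \<open>The Laplacian of the volume density\<close>

definition plane_coord :: "nat \<Rightarrow> bool \<Rightarrow> nat" where
  "plane_coord n b = (if b then n else Suc n)"

lemma plane_coord_cases: "plane_coord n b = n \<or> plane_coord n b = Suc n"
  by (simp add: plane_coord_def)

lemma coord_partial_plane_coord: "coord_partial n (plane_coord n b) H w = partial b H w"
  by (simp add: plane_coord_def coord_partial_def partial_def)

locale smooth_block_metric = nondegenerate_block_metric +
  assumes G_differentiable: "\<And>i j w. i < n \<Longrightarrow> j < n \<Longrightarrow> w \<in> \<Omega> \<Longrightarrow> G i j differentiable (at w)"
    and partial_G_differentiable:
      "\<And>i j b w. i < n \<Longrightarrow> j < n \<Longrightarrow> w \<in> \<Omega> \<Longrightarrow> partial b (G i j) differentiable (at w)"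
    and C_differentiable: "\<And>w. w \<in> \<Omega> \<Longrightarrow> C differentiable (at w)"
begin

definition dG :: "bool \<Rightarrow> real \<times> real \<Rightarrow> nat \<Rightarrow> nat \<Rightarrow> real" where
  "dG b w i j = partial b (G i j) w"

definition d2G :: "bool \<Rightarrow> real \<times> real \<Rightarrow> nat \<Rightarrow> nat \<Rightarrow> real" where
  "d2G b w i j = partial b (partial b (G i j)) w"

definition Ginv_dG :: "bool \<Rightarrow> real \<times> real \<Rightarrow> nat \<Rightarrow> nat \<Rightarrow> real" where
  "Ginv_dG b w k j = (\<Sum>d<n. Ginv w k d * dG b w d j)"

definition tr_Ginv_dG :: "bool \<Rightarrow> real \<times> real \<Rightarrow> real" where
  "tr_Ginv_dG b w = (\<Sum>k<n. Ginv_dG b w k k)"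

definition tr_sq_Ginv_dG :: "bool \<Rightarrow> real \<times> real \<Rightarrow> real" where
  "tr_sq_Ginv_dG b w = (\<Sum>j<n. \<Sum>k<n. Ginv_dG b w j k * Ginv_dG b w k j)"

definition tr_Ginv_d2G :: "bool \<Rightarrow> real \<times> real \<Rightarrow> real" where
  "tr_Ginv_d2G b w = (\<Sum>k<n. \<Sum>d<n. Ginv w k d * d2G b w d k)"

lemma partial_christoffel_plane_fiber_fiber:
  assumes "w \<in> \<Omega>" "i < n" "j < n"
  shows "coord_partial n (plane_coord n b) (block_christoffel n G C (plane_coord n b) i j) w =
    - (1/2) * (d2G b w i j * C w - dG b w i j * partial b C w) / (C w)\<^sup>2"
  unfolding coord_partial_plane_coord
proof (rule partial_eqI[OF open_domain assms(1)])
  show "block_christoffel n G C (plane_coord n b) i j x = - (1/2) * partial b (G i j) x / C x"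
    if "x \<in> \<Omega>" for x
    using christoffel_plane_fiber_fiber[OF that plane_coord_cases assms(2,3)]
    by (simp add: coord_partial_plane_coord)
  have "((\<lambda>s. partial b (G i j) (axis_path b w s)) has_real_derivative d2G b w i j)
      (at (axis_coord b w))"
    using has_real_derivative_partial[of "partial b (G i j)" b w "axis_coord b w"]
      partial_G_differentiable assms
    by (simp add: d2G_def)
  moreover have "((\<lambda>s. C (axis_path b w s)) has_real_derivative partial b C w) (at (axis_coord b w))"
    using has_real_derivative_partial[of C b w "axis_coord b w"] C_differentiable assms by simp
  ultimately show "((\<lambda>s. - (1/2) * partial b (G i j) (axis_path b w s) / C (axis_path b w s))
      has_real_derivative - (1/2) * (d2G b w i j * C w - dG b w i j * partial b C w) / (C w)\<^sup>2)
      (at (axis_coord b w))"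
    using C_nonzero[OF assms(1)]
    by (auto intro!: derivative_eq_intros simp: dG_def power2_eq_square field_simps)
qed

lemma sum_christoffel_contracted:
  assumes "w \<in> \<Omega>"
  shows "(\<Sum>a<n+2. block_christoffel n G C a a (plane_coord n b) w) =
    tr_Ginv_dG b w / 2 + partial b C w / C w"
proof -
  have "(\<Sum>a<n. block_christoffel n G C a a (plane_coord n b) w) = (\<Sum>a<n. Ginv_dG b w a a / 2)"
    using christoffel_fiber_fiber_plane[OF assms plane_coord_cases]
    by (intro sum.cong refl) (simp add: Ginv_dG_def dG_def coord_partial_plane_coord)
  moreover have "block_christoffel n G C \<alpha> \<alpha> (plane_coord n b) w = partial b C w / C w / 2"
    if "\<alpha> = n \<or> \<alpha> = Suc n" for \<alpha>
    using christoffel_plane_plane_plane_diag[OF assms that plane_coord_cases]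
    by (simp add: coord_partial_plane_coord)
  ultimately show ?thesis
    unfolding sum_lessThan_add2 by (simp add: tr_Ginv_dG_def sum_divide_distrib[symmetric])
qed

lemma ricci_fiber_part_eq:
  assumes "w \<in> \<Omega>" "i < n" "j < n"
  shows "ricci_fiber_part (plane_coord n b) i j w = - (1 / (4 * C w)) * (2 * d2G b w i j
      + tr_Ginv_dG b w * dG b w i j
      - (\<Sum>k<n. Ginv_dG b w k j * dG b w i k + dG b w j k * Ginv_dG b w k i))"
proof -
  define c c' where "c = C w" and "c' = partial b C w"
  have "c \<noteq> 0"
    using C_nonzero[OF assms(1)] by (simp add: c_def)
  have plane: "block_christoffel n G C (plane_coord n b) x y w = - (1/2) * dG b w x y / c"
    if "x < n" "y < n" for x y
    using christoffel_plane_fiber_fiber[OF assms(1) plane_coord_cases that]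
    by (simp add: dG_def coord_partial_plane_coord c_def)
  have fiber: "block_christoffel n G C k x (plane_coord n b) w = (1/2) * Ginv_dG b w k x"
    if "x < n" "k < n" for x k
    using christoffel_fiber_fiber_plane[OF assms(1) plane_coord_cases that]
    by (simp add: Ginv_dG_def dG_def coord_partial_plane_coord)
  have quadratic: "(\<Sum>k<n.
        block_christoffel n G C k j (plane_coord n b) w * block_christoffel n G C (plane_coord n b) i k w
        + block_christoffel n G C (plane_coord n b) j k w * block_christoffel n G C k i (plane_coord n b) w)
      = - (1 / (4 * c)) * (\<Sum>k<n. Ginv_dG b w k j * dG b w i k + dG b w j k * Ginv_dG b w k i)"
    unfolding sum_distrib_left using assms(2,3) \<open>c \<noteq> 0\<close>
    by (intro sum.cong refl) (simp add: plane fiber field_simps)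
  have "ricci_fiber_part (plane_coord n b) i j w =
      - (1/2) * (d2G b w i j * c - dG b w i j * c') / c\<^sup>2
      + (tr_Ginv_dG b w / 2 + c' / c) * (- (1/2) * dG b w i j / c)
      + (1 / (4 * c)) * (\<Sum>k<n. Ginv_dG b w k j * dG b w i k + dG b w j k * Ginv_dG b w k i)"
    unfolding ricci_fiber_part_def partial_christoffel_plane_fiber_fiber[OF assms]
      sum_christoffel_contracted[OF assms(1)] quadratic
    using assms(2,3) by (simp add: plane c_def c'_def)
  also have "\<dots> = - (1 / (4 * c)) * (2 * d2G b w i j + tr_Ginv_dG b w * dG b w i j
      - (\<Sum>k<n. Ginv_dG b w k j * dG b w i k + dG b w j k * Ginv_dG b w k i))"
    using \<open>c \<noteq> 0\<close> by (simp add: field_simps power2_eq_square)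
  finally show ?thesis
    by (simp add: c_def)
qed

lemma trace_block_ricci:
  assumes "w \<in> \<Omega>"
  shows "(\<Sum>i<n. \<Sum>j<n. Ginv w i j * block_ricci n G C i j w) =
    - (\<Sum>b\<in>UNIV. tr_Ginv_d2G b w - tr_sq_Ginv_dG b w + (tr_Ginv_dG b w)\<^sup>2 / 2) / (2 * C w)"
proof -
  have part: "(\<Sum>i<n. \<Sum>j<n. Ginv w i j * ricci_fiber_part (plane_coord n b) i j w) =
      - (1 / (4 * C w)) *
        (2 * tr_Ginv_d2G b w + tr_Ginv_dG b w * tr_Ginv_dG b w - 2 * tr_sq_Ginv_dG b w)"
    for b
  proof -
    have "(\<Sum>i<n. \<Sum>j<n. Ginv w i j * ricci_fiber_part (plane_coord n b) i j w) =
        - (1 / (4 * C w)) * (\<Sum>i<n. \<Sum>j<n. Ginv w i j * (2 * d2G b w i j + tr_Ginv_dG b w * dG b w i j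
          - (\<Sum>k<n. Ginv_dG b w k j * dG b w i k + dG b w j k * Ginv_dG b w k i)))"
      unfolding sum_distrib_left
      by (intro sum.cong refl) (simp add: ricci_fiber_part_eq[OF assms] mult_ac)
    also have "\<dots> = - (1 / (4 * C w)) *
        (2 * tr_Ginv_d2G b w + tr_Ginv_dG b w * tr_Ginv_dG b w - 2 * tr_sq_Ginv_dG b w)"
      using trace_ricci_fiber_form[where H="Ginv w" and M="dG b w" and N="d2G b w",
          OF Ginv_sym[OF assms]]
      by (simp add: Ginv_dG_def[abs_def] tr_Ginv_dG_def tr_sq_Ginv_dG_def tr_Ginv_d2G_def)
    finally show ?thesis .
  qed
  have "(\<Sum>i<n. \<Sum>j<n. Ginv w i j * block_ricci n G C i j w) =
      (\<Sum>i<n. \<Sum>j<n. Ginv w i j * ricci_fiber_part (plane_coord n True) i j w)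
      + (\<Sum>i<n. \<Sum>j<n. Ginv w i j * ricci_fiber_part (plane_coord n False) i j w)"
    by (simp add: block_ricci_fiber[OF assms] plane_coord_def distrib_left sum.distrib)
  also have "\<dots> = - (\<Sum>b\<in>UNIV. tr_Ginv_d2G b w - tr_sq_Ginv_dG b w + (tr_Ginv_dG b w)\<^sup>2 / 2) / (2 * C w)"
    unfolding part using C_nonzero[OF assms] by (simp add: UNIV_bool field_simps power2_eq_square)
  finally show ?thesis .
qed

definition sqrt_det :: plane_fun where
  "sqrt_det w = sqrt \<bar>Determinant.det (sq_mat n (\<lambda>i j. G i j w))\<bar>"

lemma has_real_derivative_G_axis:
  assumes "w \<in> \<Omega>" "i < n" "j < n"
  shows "((\<lambda>s. G i j (axis_path b w s)) has_real_derivative dG b w i j) (at (axis_coord b w))"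
  using has_real_derivative_partial[of "G i j" b w "axis_coord b w"] G_differentiable assms
  by (simp add: dG_def)

lemma has_real_derivative_dG_axis:
  assumes "w \<in> \<Omega>" "i < n" "j < n"
  shows "((\<lambda>s. dG b (axis_path b w s) i j) has_real_derivative d2G b w i j) (at (axis_coord b w))"
  using has_real_derivative_partial[of "partial b (G i j)" b w "axis_coord b w"]
    partial_G_differentiable assms
  by (simp add: dG_def d2G_def)

lemma has_real_derivative_det_G_axis:
  assumes "w \<in> \<Omega>"
  shows "((\<lambda>s. Determinant.det (sq_mat n (\<lambda>i j. G i j (axis_path b w s)))) has_real_derivative
    Determinant.det (sq_mat n (\<lambda>i j. G i j w)) * tr_Ginv_dG b w) (at (axis_coord b w))"
proof -
  have "cofactor (sq_mat n (\<lambda>i j. G i j w)) i j =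
      Determinant.det (sq_mat n (\<lambda>i j. G i j w)) * Ginv w j i"
    for i j
    using det_G_nonzero[OF assms] by (simp add: Ginv_def inv_mat_def)
  then have "(\<Sum>i<n. \<Sum>j<n. dG b w i j * cofactor (sq_mat n (\<lambda>i j. G i j w)) i j) =
      Determinant.det (sq_mat n (\<lambda>i j. G i j w)) * (\<Sum>i<n. \<Sum>j<n. Ginv w j i * dG b w i j)"
    by (simp add: sum_distrib_left mult_ac)
  also have "(\<Sum>i<n. \<Sum>j<n. Ginv w j i * dG b w i j) = tr_Ginv_dG b w"
    unfolding tr_Ginv_dG_def Ginv_dG_def by (rule sum.swap)
  finally have "(\<Sum>i<n. \<Sum>j<n. dG b w i j * cofactor (sq_mat n (\<lambda>i j. G i j w)) i j) =
      Determinant.det (sq_mat n (\<lambda>i j. G i j w)) * tr_Ginv_dG b w" .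
  moreover have "((\<lambda>s. Determinant.det (sq_mat n (\<lambda>i j. G i j (axis_path b w s)))) has_real_derivative
      (\<Sum>i<n. \<Sum>j<n. dG b w i j * cofactor (sq_mat n (\<lambda>i j. G i j w)) i j)) (at (axis_coord b w))"
    using has_real_derivative_det[where n=n and F="\<lambda>i j s. G i j (axis_path b w s)" and F'="dG b w"
        and t="axis_coord b w", OF has_real_derivative_G_axis[OF assms]]
    by simp
  ultimately show ?thesis
    by simp
qed

lemma has_real_derivative_sqrt_det_axis:
  assumes "w \<in> \<Omega>"
  shows "((\<lambda>s. sqrt_det (axis_path b w s)) has_real_derivative sqrt_det w * tr_Ginv_dG b w / 2)
    (at (axis_coord b w))"
  using has_real_derivative_sqrt_abs[OF has_real_derivative_det_G_axis[OF assms]]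
    det_G_nonzero[OF assms]
  by (simp add: sqrt_det_def)

lemma partial_sqrt_det: "w \<in> \<Omega> \<Longrightarrow> partial b sqrt_det w = sqrt_det w * tr_Ginv_dG b w / 2"
  by (rule partial_eqI[OF open_domain _ refl has_real_derivative_sqrt_det_axis])

lemma has_real_derivative_Ginv_axis:
  assumes "w \<in> \<Omega>" "i < n" "j < n"
  shows "((\<lambda>s. Ginv (axis_path b w s) i j) has_real_derivative
    - (\<Sum>a<n. \<Sum>k<n. Ginv w i a * dG b w a k * Ginv w k j)) (at (axis_coord b w))"
  using has_real_derivative_inv_mat[where F="\<lambda>i j s. G i j (axis_path b w s)" and F'="dG b w",
      OF has_real_derivative_G_axis[OF assms(1)]] det_G_nonzero[OF assms(1)] assms(2,3)
  by (simp add: Ginv_def)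

lemma has_real_derivative_tr_Ginv_dG_axis:
  assumes "w \<in> \<Omega>"
  shows "((\<lambda>s. tr_Ginv_dG b (axis_path b w s)) has_real_derivative
    tr_Ginv_d2G b w - tr_sq_Ginv_dG b w) (at (axis_coord b w))"
proof -
  have "((\<lambda>s. tr_Ginv_dG b (axis_path b w s)) has_real_derivative
      (\<Sum>k<n. \<Sum>d<n. - (\<Sum>a<n. \<Sum>l<n. Ginv w k a * dG b w a l * Ginv w l d) * dG b w d k
        + d2G b w d k * Ginv w k d)) (at (axis_coord b w))"
    unfolding tr_Ginv_dG_def Ginv_dG_def
  proof (intro DERIV_sum)
    fix k d assume "k \<in> {..<n}" "d \<in> {..<n}"
    then show "((\<lambda>s. Ginv (axis_path b w s) k d * dG b (axis_path b w s) d k) has_real_derivative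
        - (\<Sum>a<n. \<Sum>l<n. Ginv w k a * dG b w a l * Ginv w l d) * dG b w d k + d2G b w d k * Ginv w k d)
        (at (axis_coord b w))"
      using DERIV_mult[OF has_real_derivative_Ginv_axis has_real_derivative_dG_axis, OF assms _ _ assms]
      by simp
  qed
  moreover have "(\<Sum>d<n. (\<Sum>a<n. \<Sum>l<n. Ginv w k a * dG b w a l * Ginv w l d) * dG b w d k) =
      (\<Sum>l<n. Ginv_dG b w k l * Ginv_dG b w l k)" for k
  proof -
    have "(\<Sum>d<n. (\<Sum>a<n. \<Sum>l<n. Ginv w k a * dG b w a l * Ginv w l d) * dG b w d k) =
        (\<Sum>d<n. \<Sum>a<n. \<Sum>l<n. Ginv w k a * dG b w a l * (Ginv w l d * dG b w d k))"
      by (simp add: sum_distrib_right mult.assoc)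
    also have "\<dots> = (\<Sum>l<n. \<Sum>a<n. \<Sum>d<n. Ginv w k a * dG b w a l * (Ginv w l d * dG b w d k))"
      by (rule sum_swap3)
    finally show ?thesis
      by (simp add: Ginv_dG_def sum_product)
  qed
  ultimately show ?thesis
    by (simp add: tr_Ginv_d2G_def tr_sq_Ginv_dG_def sum.distrib sum_negf sum_subtractf mult.commute
        sum_distrib_right[symmetric])
qed

lemma partial_partial_sqrt_det:
  assumes "w \<in> \<Omega>"
  shows "partial b (partial b sqrt_det) w =
    sqrt_det w / 2 * (tr_Ginv_d2G b w - tr_sq_Ginv_dG b w + (tr_Ginv_dG b w)\<^sup>2 / 2)"
proof -
  have "((\<lambda>s. sqrt_det (axis_path b w s) * tr_Ginv_dG b (axis_path b w s) / 2) has_real_derivative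
      ((sqrt_det w * tr_Ginv_dG b w / 2) * tr_Ginv_dG b w
        + (tr_Ginv_d2G b w - tr_sq_Ginv_dG b w) * sqrt_det w) / 2) (at (axis_coord b w))"
    using DERIV_mult[OF has_real_derivative_sqrt_det_axis[OF assms]
        has_real_derivative_tr_Ginv_dG_axis[OF assms]]
    by (intro DERIV_cdivide) simp
  then have "partial b (partial b sqrt_det) w = ((sqrt_det w * tr_Ginv_dG b w / 2) * tr_Ginv_dG b w
        + (tr_Ginv_d2G b w - tr_sq_Ginv_dG b w) * sqrt_det w) / 2"
    by (rule partial_eqI[OF open_domain assms partial_sqrt_det, rotated])
  then show ?thesis
    by (simp add: field_simps power2_eq_square)
qed

lemma laplacian_sqrt_det:
  assumes "w \<in> \<Omega>"
  shows "pu (pu sqrt_det) w + pv (pv sqrt_det) w =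
    - C w * sqrt_det w * (\<Sum>i<n. \<Sum>j<n. Ginv w i j * block_ricci n G C i j w)"
proof -
  have "pu (pu sqrt_det) w + pv (pv sqrt_det) w =
      sqrt_det w / 2 * (\<Sum>b\<in>UNIV. tr_Ginv_d2G b w - tr_sq_Ginv_dG b w + (tr_Ginv_dG b w)\<^sup>2 / 2)"
    using partial_partial_sqrt_det[OF assms, of True] partial_partial_sqrt_det[OF assms, of False]
    by (simp add: partial_def UNIV_bool algebra_simps)
  also have "(\<Sum>b\<in>UNIV. tr_Ginv_d2G b w - tr_sq_Ginv_dG b w + (tr_Ginv_dG b w)\<^sup>2 / 2) =
      - 2 * C w * (\<Sum>i<n. \<Sum>j<n. Ginv w i j * block_ricci n G C i j w)"
    using C_nonzero[OF assms] by (simp add: trace_block_ricci[OF assms])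
  finally show ?thesis
    by simp
qed

lemma differentiable_sqrt_det:
  assumes "w \<in> \<Omega>"
  shows "sqrt_det differentiable (at w)"
proof -
  let ?d = "\<lambda>w. Determinant.det (sq_mat n (\<lambda>i j. G i j w))"
  have sqrt_differentiable: "0 < x \<Longrightarrow> sqrt differentiable (at x)" for x :: real
    using DERIV_real_sqrt real_differentiable_def by blast
  have "?d differentiable (at w)"
    using G_differentiable assms by (intro differentiable_det) auto
  then have "(\<lambda>w. sqrt (sqrt ((?d w)\<^sup>2))) differentiable (at w)"
    using det_G_nonzero[OF assms]
    by (intro differentiable_compose[OF sqrt_differentiable] differentiable_power) auto
  then show ?thesis
    by (simp add: sqrt_det_def[abs_def] real_sqrt_abs)
qed

lemma differentiable_partial_sqrt_det:
  assumes "w \<in> \<Omega>"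
  shows "partial b sqrt_det differentiable (at w)"
proof -
  have "tr_Ginv_dG b = (\<lambda>w. \<Sum>k<n. \<Sum>d<n. inv_mat n (\<lambda>i j. G i j w) k d * partial b (G d k) w)"
    by (simp add: fun_eq_iff tr_Ginv_dG_def Ginv_dG_def dG_def Ginv_def)
  then have "tr_Ginv_dG b differentiable (at w)"
    using det_G_nonzero[OF assms]
    by (auto intro!: differentiable_sum differentiable_mult differentiable_inv_mat
        G_differentiable partial_G_differentiable assms)
  then have diff: "(\<lambda>x. sqrt_det x * tr_Ginv_dG b x / 2) differentiable (at w)"
    using differentiable_sqrt_det[OF assms]
    by (intro differentiable_divide differentiable_mult) auto
  obtain r where "0 < r" "ball w r \<subseteq> \<Omega>"
    using open_domain assms openE by blast
  show ?thesis
  proof (rule differentiable_transform_within[OF diff \<open>0 < r\<close>])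
    fix x assume "dist x w < r"
    then have "x \<in> \<Omega>"
      using \<open>ball w r \<subseteq> \<Omega>\<close> by (auto simp: dist_commute)
    then show "sqrt_det x * tr_Ginv_dG b x / 2 = partial b sqrt_det x"
      by (simp add: partial_sqrt_det)
  qed simp
qed

end

lemma smooth2_on_differentiable:
  assumes "open S" "smooth2_on S H" "w \<in> S"
  shows "H differentiable (at w) \<and> pu H differentiable (at w) \<and> pv H differentiable (at w)"
proof -
  have "Ck_on 2 S H"
    using assms(2) by (simp add: smooth2_on_def)
  then show ?thesis
    using assms(1,3) by (simp add: numeral_2_eq_2 differentiable_on_eq_differentiable_at)
qed

theorem mainTheorem10:
  fixes n :: nat
    and G :: "nat \<Rightarrow> nat \<Rightarrow> real \<times> real \<Rightarrow> real"
    and C :: "real \<times> real \<Rightarrow> real"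
    and \<Omega> :: "(real \<times> real) set"
  assumes domain: "open \<Omega>" "connected \<Omega>" "simply_connected \<Omega>"
    and smooth_G: "\<And>i j. i < n \<Longrightarrow> j < n \<Longrightarrow> smooth2_on \<Omega> (G i j)"
    and smooth_C: "smooth2_on \<Omega> C"
    and sym_G: "\<And>i j w. i < n \<Longrightarrow> j < n \<Longrightarrow> w \<in> \<Omega> \<Longrightarrow> G i j w = G j i w"
    and nondeg_G: "\<And>w. w \<in> \<Omega> \<Longrightarrow> detn n (\<lambda>i j. G i j w) \<noteq> 0"
    and nondeg_C: "\<And>w. w \<in> \<Omega> \<Longrightarrow> C w \<noteq> 0"
    and ricci_flat: "\<And>p a b. (p n, p (Suc n)) \<in> \<Omega> \<Longrightarrow> a < n + 2 \<Longrightarrow> b < n + 2 \<Longrightarrow>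
                       ricci (n + 2) (warped_metric n G C) a b p = 0"
  defines "f \<equiv> (\<lambda>w. sqrt \<bar>detn n (\<lambda>i j. G i j w)\<bar>)"
  shows "(\<exists>c. \<forall>w\<in>\<Omega>. f w = c) \<or>
         (\<forall>w\<in>\<Omega>. \<forall>\<^sub>F z in at w. (pu f z, pv f z) \<noteq> (0, 0))"
proof -
  interpret smooth_block_metric n G C \<Omega>
  proof
    fix i j b w assume "i < n" "j < n" "w \<in> \<Omega>"
    then show "G i j differentiable (at w)" "partial b (G i j) differentiable (at w)"
      using smooth2_on_differentiable[OF domain(1) smooth_G] by (auto simp: partial_def)
  qed (use domain(1) nondeg_G nondeg_C sym_G smooth2_on_differentiable[OF domain(1) smooth_C]
      in \<open>auto simp: detn_eq_det\<close>)
  have "f = sqrt_det"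
    by (simp add: fun_eq_iff f_def sqrt_det_def detn_eq_det)
  moreover have "block_ricci n G C i j w = 0" if "w \<in> \<Omega>" "i < n" "j < n" for i j w
    using ricci_flat[of "\<lambda>k. if k = n then fst w else snd w" i j] ricci_warped_metric[of n G C i j] that
    by simp
  then have "pu (pu sqrt_det) w + pv (pv sqrt_det) w = 0" if "w \<in> \<Omega>" for w
    using that by (simp add: laplacian_sqrt_det)
  ultimately show ?thesis
    using differentiable_sqrt_det differentiable_partial_sqrt_det[of _ True]
      differentiable_partial_sqrt_det[of _ False]
    by (intro harmonic_constant_or_isolated_critical_points domain(1,2)) (auto simp: partial_def)
qed

end
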